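(* Let $X$ have a pdf $f$ satisfying Conditions (A) and (B) below. For $\delta>0$ let $D_\delta=D(Q_{\mathrm{uni}}^\delta)$ be the mean-squared distortion of the uniform quantizer with cell size $\delta$. Then $$\lim_{\delta\to 0}\Big[\mathrm{AoI}(S_{\mathrm z},Q_{\mathrm{uni}}^\delta,F^* )-\inf_{S}\ \inf_{Q:\,D(Q)\le D_\delta}\ \mathrm{AoI}(S,Q,F^* )\Big]=0,$$ where the outer infimum is over all stationary deterministic sampling policies $S$ and the inner one is over all quantizers $Q$ with $D(Q)\le D_\delta$. In words: as the distortion tends to $0$, zero-wait sampling, uniform quantization and the real-valued AoI-optimal code together asymptotically achieve the optimal AoI of the joint sampling–quantization–coding problem.
   Context: Let $X$ be a real random variable with pdf $f$. Condition (A): $f$ is continuous and differentiable, and its support is a bounded interval $I$. Let $M=\max f$. Condition (B): the integrals $\int_I f(x)\log_2^2 f(x)\,dx$ and $h(X)=-\int_I f(x)\log_2 f(x)\,dx$ exist and are finite. Quantizers. A quantizer $Q$ partitions $I$ into consecutive intervals $[a_{i-1},a_i]$. Each interval has a representation point $c_i$, and $Q(X)=c_i$ when $X$ lies in the $i$-th cell. Write $p_i=P(X\in[a_{i-1},a_i])$. The output entropy is $H[Q(X)]=-\sum_i p_i\log_2 p_i$, and the mean-squared distortion is $D(Q)=\sum_i\int_{a_{i-1}}^{a_i}(x-c_i)^2f(x)\,dx$. The uniform quantizer $Q_{\mathrm{uni}}^\delta$ partitions $I$ into consecutive cells of length $\delta$, with representation points at the cell midpoints. Codes. A real-valued code for $Q$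 assigns a length $l_i\in\mathbb R^+$ to each cell, subject to the Kraft inequality $\sum_i 2^{-l_i}\le1$. The random codeword length is $L=l_i$ when $X$ is in cell $i$. Sampling policies. A stationary deterministic sampling policy $S$ is given by a measurable function $z:[0,\infty)\to[0,W]$, for some fixed $W$, which determines the waiting time $Z=z(L)\ge0$. The zero-wait policy $S_{\mathrm z}$ has $z\equiv0$. Objective. The AoI of $(S,Q,l)$ is $\mathrm{AoI}(S,Q,l)=\frac{E[(L+Z)^2]}{2E[L+Z]}+E[L]$. The real-valued AoI-optimal code $F^*$ attains the infimum over codes, and we write $\mathrm{AoI}(S,Q,F^* )=\inf_l \mathrm{AoI}(S,Q,l)$, the infimum being over real-valued codes for $Q$. *)

theory Defs
  imports "HOL-Analysis.Analysis"
begin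

text \<open>A quantizer of the support interval [a,b] with n cells is given by
  thresholds t 0 = a < t 1 < ... < t n = b; cell i (1 \<le> i \<le> n) is [t (i-1), t i],
  with representation point c i.\<close>

definition is_quantizer :: "real \<Rightarrow> real \<Rightarrow> nat \<Rightarrow> (nat \<Rightarrow> real) \<Rightarrow> bool" where
  "is_quantizer a b n t \<longleftrightarrow> n \<ge> 1 \<and> t 0 = a \<and> t n = b \<and> (\<forall>i<n. t i < t (Suc i))"

definition cellprob :: "(real \<Rightarrow> real) \<Rightarrow> (nat \<Rightarrow> real) \<Rightarrow> nat \<Rightarrow> real" where
  "cellprob f t i = integral {t (i - 1)..t i} f"

definition distortion :: "(real \<Rightarrow> real) \<Rightarrow> nat \<Rightarrow> (nat \<Rightarrow> real) \<Rightarrow> (nat \<Rightarrow> real) \<Rightarrow> real" where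
  "distortion f n t c = (\<Sum>i=1..n. integral {t (i - 1)..t i} (\<lambda>x. (x - c i)^2 * f x))"

definition is_code :: "nat \<Rightarrow> (nat \<Rightarrow> real) \<Rightarrow> bool" where
  "is_code n l \<longleftrightarrow> (\<forall>i\<in>{1..n}. l i > 0) \<and> (\<Sum>i=1..n. 2 powr (- l i)) \<le> 1"

definition is_policy :: "real \<Rightarrow> (real \<Rightarrow> real) \<Rightarrow> bool" where
  "is_policy W z \<longleftrightarrow> z \<in> borel_measurable (restrict_space borel {0..}) \<and>
     (\<forall>x\<ge>0. 0 \<le> z x \<and> z x \<le> W)"

text \<open>AoI(S,Q,l) = E[(L+Z)^2] / (2 E[L+Z]) + E[L], with L = l_i on cell i, Z = z(L).\<close>
definition aoi :: "(real \<Rightarrow> real) \<Rightarrow> nat \<Rightarrow> (nat \<Rightarrow> real) \<Rightarrow> (real \<Rightarrow> real) \<Rightarrow> (nat \<Rightarrow> real) \<Rightarrow> real" where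
  "aoi f n t z l =
     (\<Sum>i=1..n. cellprob f t i * (l i + z (l i))^2) / (2 * (\<Sum>i=1..n. cellprob f t i * (l i + z (l i))))
     + (\<Sum>i=1..n. cellprob f t i * l i)"

definition aoi_opt :: "(real \<Rightarrow> real) \<Rightarrow> nat \<Rightarrow> (nat \<Rightarrow> real) \<Rightarrow> (real \<Rightarrow> real) \<Rightarrow> real" where
  "aoi_opt f n t z = Inf {aoi f n t z l | l. is_code n l}"

definition uni_n :: "real \<Rightarrow> real \<Rightarrow> real \<Rightarrow> nat" where
  "uni_n a b \<delta> = nat \<lceil>(b - a) / \<delta>\<rceil>"

definition uni_t :: "real \<Rightarrow> real \<Rightarrow> real \<Rightarrow> nat \<Rightarrow> real" where
  "uni_t a b \<delta> i = min (a + real i * \<delta>) b"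

definition uni_c :: "real \<Rightarrow> real \<Rightarrow> real \<Rightarrow> nat \<Rightarrow> real" where
  "uni_c a b \<delta> i = (uni_t a b \<delta> (i - 1) + uni_t a b \<delta> i) / 2"

end

(*
  For every sampling policy and every code, E[(L+Z)^2] >= E[L+Z]^2 and Kraft's inequality give
  AoI >= (3/2) E[L] >= (3/2) H[Q(X)]; so the joint optimum is at least (3/2) times the least output
  entropy of a quantizer whose distortion does not exceed D_delta. Zero-wait sampling with the
  Shannon lengths -log P_i of the uniform quantizer achieves (3/2) H + Var(L) / (2 H), where Var(L)
  stays bounded (the density is bounded) while H grows like -log delta.

  It remains to see that the uniform quantizer asymptotically minimises the output entropy under its
  own distortion: H = h(X) - log delta + o(1) and 12 D_delta = delta^2 (1 + o(1)), whereas every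
  quantizer with small distortion D has H >= h(X) - (1/2) log (12 D) - o(1). The latter is proved
  cell by cell with Gibbs' inequality, against the uniform density on cells where f is nearly
  constant and against a Cauchy density with the cell's second moment on the others; by uniform
  continuity and Chebyshev's inequality the cells of the second kind carry little mass.
*)
theory Submission
  imports Defs "HOL-Real_Asymp.Real_Asymp"
begin

section \<open>Elementary inequalities and integrals\<close>

lemma gibbs_pointwise_ge:
  fixes y p q :: real
  assumes "0 \<le> y" "0 < p" "0 < q"
  shows "y * ln q + y - p * q \<le> y * ln y - y * ln p"
proof (cases "y = 0")
  case False
  with assms have y: "0 < y" by simp
  have "ln (p * q / y) \<le> p * q / y - 1"
    using assms y by (intro ln_le_minus_one) simp
  moreover have "ln (p * q / y) = ln p + ln q - ln y"
    using assms y by (simp add: ln_div ln_mult)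
  ultimately have "y * (ln p + ln q - ln y) \<le> y * (p * q / y - 1)"
    using y by (intro mult_left_mono) auto
  with y show ?thesis by (simp add: algebra_simps)
qed (use assms in simp)

lemma gibbs_pointwise_le:
  fixes y q :: real
  assumes "0 \<le> y" "0 < q"
  shows "y * ln y - y * ln q \<le> y * y / q - y"
proof (cases "y = 0")
  case False
  with assms have y: "0 < y" by simp
  have "ln (y / q) \<le> y / q - 1"
    using assms y by (intro ln_le_minus_one) simp
  moreover have "ln (y / q) = ln y - ln q"
    using assms y by (simp add: ln_div)
  ultimately have "y * (ln y - ln q) \<le> y * (y / q - 1)"
    using y by (intro mult_left_mono) auto
  with y show ?thesis by (simp add: algebra_simps)
qed simp

lemma sum_mult_ln_le_ln_sum:
  fixes p x :: "'a \<Rightarrow> real"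
  assumes "finite I" "\<forall>i\<in>I. 0 < p i \<and> 0 < x i" "(\<Sum>i\<in>I. p i) = 1"
  shows "(\<Sum>i\<in>I. p i * ln (x i)) \<le> ln (\<Sum>i\<in>I. p i * x i)"
proof -
  define m where "m = (\<Sum>i\<in>I. p i * x i)"
  have "I \<noteq> {}" using assms(3) by auto
  with assms have m: "0 < m" unfolding m_def by (intro sum_pos) auto
  have "(\<Sum>i\<in>I. p i * (ln (x i) - ln m)) \<le> (\<Sum>i\<in>I. p i * (x i / m - 1))"
  proof (rule sum_mono)
    fix i assume i: "i \<in> I"
    have "ln (x i / m) \<le> x i / m - 1"
      using assms i m by (intro ln_le_minus_one) simp
    moreover have "ln (x i / m) = ln (x i) - ln m"
      using assms i m by (intro ln_divide_pos) auto
    ultimately show "p i * (ln (x i) - ln m) \<le> p i * (x i / m - 1)"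
      using assms i by (intro mult_left_mono) auto
  qed
  also have "\<dots> = 0"
    using m assms(3) by (simp add: algebra_simps sum_subtractf sum_divide_distrib[symmetric] m_def)
  finally show ?thesis
    using assms(3) by (simp add: m_def algebra_simps sum_subtractf sum_distrib_right[symmetric])
qed

lemma mult_ln_squared_le:
  fixes x M :: real
  assumes "0 < x" "x \<le> M" "1 \<le> M"
  shows "x * (ln x)^2 \<le> 4 + M * (ln M)^2"
proof (cases "x \<le> 1")
  case True
  define y where "y = sqrt x"
  have y: "0 < y" "y \<le> 1" "x = y^2" using assms True by (auto simp: y_def)
  have "- ln y \<le> 1 / y - 1"
    using ln_le_minus_one[of "1 / y"] y by (simp add: ln_div)
  moreover have "ln y \<le> 0" using y by simp
  ultimately have "(- ln y)^2 \<le> (1 / y)^2"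
    using y by (intro power_mono) auto
  hence "y^2 * (ln y)^2 \<le> y^2 * (1 / y)^2"
    using y by (intro mult_left_mono) auto
  hence "y^2 * (ln y)^2 \<le> 1" using y by (simp add: power_divide)
  hence "x * (ln x)^2 \<le> 4" using y by (simp add: ln_realpow power_mult_distrib)
  moreover have "0 \<le> M * (ln M)^2" using assms by simp
  ultimately show ?thesis by linarith
next
  case False
  with assms have "(ln x)^2 \<le> (ln M)^2" by (intro power_mono) auto
  with assms have "x * (ln x)^2 \<le> M * (ln M)^2" by (intro mult_mono) auto
  thus ?thesis by simp
qed

lemma integral_power2_diff:
  fixes u v c :: real
  assumes "u \<le> v"
  shows "integral {u..v} (\<lambda>x. (x - c)^2) = ((v - c)^3 - (u - c)^3) / 3"
proof -
  have "((\<lambda>x. (x - c)^2) has_integral (v - c)^3 / 3 - (u - c)^3 / 3) {u..v}"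
  proof (rule fundamental_theorem_of_calculus[OF assms])
    fix x assume "x \<in> {u..v}"
    have "((\<lambda>x. (x - c)^3 / 3) has_real_derivative (x - c)^2) (at x within {u..v})"
      by (rule derivative_eq_intros refl | simp)+
    thus "((\<lambda>x. (x - c)^3 / 3) has_vector_derivative (x - c)^2) (at x within {u..v})"
      by (simp add: has_real_derivative_iff_has_vector_derivative)
  qed
  thus ?thesis by (simp add: integral_unique diff_divide_distrib)
qed

lemma integral_power2_diff_ge:
  fixes u v c :: real
  assumes "u \<le> v"
  shows "(v - u)^3 / 12 \<le> integral {u..v} (\<lambda>x. (x - c)^2)"
proof -
  have "((v - c)^3 - (u - c)^3) / 3 - (v - u)^3 / 12 = (v - u) * ((v - c) + (u - c))^2 / 4"
    by (simp add: power2_eq_square power3_eq_cube algebra_simps divide_simps)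
  moreover have "0 \<le> (v - u) * ((v - c) + (u - c))^2 / 4" using assms by simp
  ultimately show ?thesis using integral_power2_diff[OF assms, of c] by linarith
qed

lemma integral_power2_diff_midpoint:
  fixes u v :: real
  assumes "u \<le> v"
  shows "integral {u..v} (\<lambda>x. (x - (u + v) / 2)^2) = (v - u)^3 / 12"
proof -
  have "((v - (u + v) / 2)^3 - (u - (u + v) / 2)^3) / 3 = (v - u)^3 / 12"
    by (simp add: power3_eq_cube algebra_simps divide_simps)
  thus ?thesis using integral_power2_diff[OF assms, of "(u + v) / 2"] by simp
qed

lemma integral_split3:
  fixes h :: "real \<Rightarrow> real"
  assumes "u \<le> p" "p \<le> q" "q \<le> v" "\<And>x y. u \<le> x \<Longrightarrow> y \<le> v \<Longrightarrow> h integrable_on {x..y}"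
  shows "integral {u..v} h = integral {u..p} h + integral {p..q} h + integral {q..v} h"
proof -
  have "integral {u..v} h = integral {u..p} h + integral {p..v} h"
    by (rule Henstock_Kurzweil_Integration.integral_combine[symmetric]) (use assms in auto)
  moreover have "integral {p..v} h = integral {p..q} h + integral {q..v} h"
    by (rule Henstock_Kurzweil_Integration.integral_combine[symmetric]) (use assms in auto)
  ultimately show ?thesis by simp
qed

lemma le_moment_weight:
  fixes s x c y :: real
  assumes "0 < s" "s \<le> \<bar>x - c\<bar>" "0 \<le> y"
  shows "y \<le> (x - c)^2 * y / s^2"
proof -
  have "s^2 \<le> (x - c)^2" using assms by (metis abs_le_square_iff abs_of_pos)
  hence "y * s^2 \<le> (x - c)^2 * y" using assms by (simp add: mult_left_mono mult.commute)
  thus ?thesis using assms by (simp add: field_simps)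
qed

definition cauchy_density :: "real \<Rightarrow> real \<Rightarrow> real \<Rightarrow> real" where
  "cauchy_density c s x = 1 / (pi * s * (1 + ((x - c) / s)^2))"

lemma cauchy_density_pos: "0 < s \<Longrightarrow> 0 < cauchy_density c s x"
  unfolding cauchy_density_def by (simp add: add_pos_nonneg)

lemma continuous_on_cauchy_density: "0 < s \<Longrightarrow> continuous_on A (cauchy_density c s)"
  unfolding cauchy_density_def
  by (intro continuous_intros) (auto simp: add_nonneg_eq_0_iff simp del: power_divide)

lemma ln_cauchy_density_ge:
  assumes "0 < s"
  shows "- ln (pi * s) - (x - c)^2 / s^2 \<le> ln (cauchy_density c s x)"
proof -
  have "0 < 1 + ((x - c) / s)^2" by (simp add: add_pos_nonneg)
  hence "ln (cauchy_density c s x) = - ln (pi * s) - ln (1 + ((x - c) / s)^2)"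
    unfolding cauchy_density_def using assms by (simp add: ln_div ln_mult)
  moreover have "ln (1 + ((x - c) / s)^2) \<le> ((x - c) / s)^2"
    by (rule ln_add_one_self_le_self) simp
  ultimately show ?thesis by (simp add: power_divide)
qed

lemma integral_cauchy_density_le_1:
  fixes u v :: real
  assumes "u \<le> v" "0 < s"
  shows "integral {u..v} (cauchy_density c s) \<le> 1"
proof -
  define F where "F x = arctan ((x - c) / s) / pi" for x
  have "(cauchy_density c s has_integral F v - F u) {u..v}"
  proof (rule fundamental_theorem_of_calculus[OF assms(1)])
    fix x assume "x \<in> {u..v}"
    have "((\<lambda>x. (x - c) / s) has_real_derivative 1 / s) (at x within {u..v})"
      using assms(2) by (auto intro!: derivative_eq_intros)
    from DERIV_chain2[OF DERIV_arctan this]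
    have "(F has_real_derivative inverse (1 + ((x - c) / s)^2) * (1 / s) / pi) (at x within {u..v})"
      unfolding F_def by (rule DERIV_cdivide)
    moreover have "inverse (1 + ((x - c) / s)^2) * (1 / s) / pi = cauchy_density c s x"
      by (simp add: cauchy_density_def field_simps)
    ultimately show "(F has_vector_derivative cauchy_density c s x) (at x within {u..v})"
      by (simp add: has_real_derivative_iff_has_vector_derivative)
  qed
  moreover have "F v - F u \<le> 1"
    using arctan_bounded[of "(v - c) / s"] arctan_bounded[of "(u - c) / s"]
    by (simp add: F_def diff_divide_distrib[symmetric])
  ultimately show ?thesis by (simp add: integral_unique)
qed

section \<open>Entropy, codes and the age of information\<close>

lemma sum_weighted_square_diff:
  fixes p w :: "'a \<Rightarrow> real"
  assumes "(\<Sum>i\<in>I. p i) = 1"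
  shows "(\<Sum>i\<in>I. p i * (w i - c)^2)
           = (\<Sum>i\<in>I. p i * (w i)^2) - (\<Sum>i\<in>I. p i * w i)^2 + ((\<Sum>i\<in>I. p i * w i) - c)^2"
proof -
  have "(\<Sum>i\<in>I. p i * (w i - c)^2)
          = (\<Sum>i\<in>I. p i * (w i)^2) - 2 * c * (\<Sum>i\<in>I. p i * w i) + c^2 * (\<Sum>i\<in>I. p i)"
    by (simp add: power2_eq_square algebra_simps sum.distrib sum_subtractf sum_distrib_left)
  with assms show ?thesis by (simp add: power2_eq_square algebra_simps)
qed

(* Entropies are measured in nats throughout; the paper's values in bits are these divided by ln 2. *)
definition entropy :: "nat \<Rightarrow> (nat \<Rightarrow> real) \<Rightarrow> real" where
  "entropy n p = (\<Sum>i=1..n. - p i * ln (p i))"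

lemma entropy_le_mean_length:
  assumes "\<forall>i\<in>{1..n}. 0 \<le> p i" "(\<Sum>i=1..n. p i) = 1" "is_code n l"
  shows "entropy n p \<le> ln 2 * (\<Sum>i=1..n. p i * l i)"
proof -
  have "- p i * ln (p i) \<le> ln 2 * (p i * l i) - p i + 2 powr (- l i)" if "i \<in> {1..n}" for i
    using gibbs_pointwise_ge[of "p i" 1 "2 powr (- l i)"] assms(1) that
    by (simp add: ln_powr algebra_simps)
  hence "entropy n p \<le> (\<Sum>i=1..n. ln 2 * (p i * l i) - p i + 2 powr (- l i))"
    unfolding entropy_def by (rule sum_mono)
  also have "\<dots> = ln 2 * (\<Sum>i=1..n. p i * l i) - 1 + (\<Sum>i=1..n. 2 powr (- l i))"
    using assms(2) by (simp add: sum.distrib sum_subtractf sum_distrib_left)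
  also have "\<dots> \<le> ln 2 * (\<Sum>i=1..n. p i * l i)"
    using assms(3) by (simp add: is_code_def)
  finally show ?thesis .
qed

lemma is_code_constant:
  assumes "1 \<le> n"
  shows "is_code n (\<lambda>_. log 2 (real n) + 1)"
proof -
  have "2 powr (log 2 (real n) + 1) = 2 * real n"
    using assms by (simp add: powr_add)
  hence "2 powr (- (log 2 (real n) + 1)) = 1 / (2 * real n)"
    by (metis powr_minus_divide)
  moreover have "0 < log 2 (real n) + 1"
    using assms by (simp add: add_nonneg_pos)
  ultimately show ?thesis using assms unfolding is_code_def by simp
qed

lemma is_code_shannon:
  assumes "\<forall>i\<in>{1..n}. 0 < p i \<and> p i < 1" "(\<Sum>i=1..n. p i) = 1"
  shows "is_code n (\<lambda>i. - log 2 (p i))"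
proof -
  have "(\<Sum>i=1..n. 2 powr (- (- log 2 (p i)))) = (\<Sum>i=1..n. p i)"
    using assms(1) by (intro sum.cong) auto
  with assms show ?thesis by (simp add: is_code_def)
qed

lemma aoi_ge_mean_length:
  assumes P0: "\<forall>i\<in>{1..n}. 0 \<le> cellprob f t i" and P1: "(\<Sum>i=1..n. cellprob f t i) = 1"
    and l: "\<forall>i\<in>{1..n}. 0 < l i" and z: "\<forall>x\<ge>0. 0 \<le> z x"
  shows "3/2 * (\<Sum>i=1..n. cellprob f t i * l i) \<le> aoi f n t z l"
proof -
  define P where "P = cellprob f t"
  define w where "w i = l i + z (l i)" for i
  define L where "L = (\<Sum>i=1..n. P i * l i)"
  define B where "B = (\<Sum>i=1..n. P i * w i)"
  define A where "A = (\<Sum>i=1..n. P i * (w i)^2)"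
  have l0: "\<forall>i\<in>{1..n}. 0 \<le> l i" using l by (auto intro: less_imp_le)
  obtain j where j: "j \<in> {1..n}" "0 < P j"
    using P1 sum_nonpos[of "{1..n}" P] unfolding P_def by force
  have "0 < L" unfolding L_def
    by (rule sum_pos2[OF _ j(1)]) (use j l l0 P0 in \<open>auto simp: P_def intro!: mult_nonneg_nonneg\<close>)
  moreover have "L \<le> B" unfolding B_def L_def
    by (rule sum_mono) (use l0 z P0 in \<open>auto simp: P_def w_def intro!: mult_left_mono\<close>)
  moreover have "B^2 \<le> A"
    using sum_weighted_square_diff[of P "{1..n}" w B] P1
      sum_nonneg[of "{1..n}" "\<lambda>i. P i * (w i - B)^2"] P0
    by (simp add: A_def B_def P_def)
  ultimately have "B / 2 \<le> A / (2 * B)"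
    by (simp add: field_simps power2_eq_square)
  moreover have "aoi f n t z l = A / (2 * B) + L"
    by (simp add: aoi_def A_def B_def L_def P_def w_def)
  ultimately have "3/2 * L \<le> aoi f n t z l"
    using \<open>L \<le> B\<close> by linarith
  thus ?thesis by (simp add: L_def P_def)
qed

lemma aoi_opt_ge_entropy:
  assumes "1 \<le> n" "\<forall>i\<in>{1..n}. 0 \<le> cellprob f t i" "(\<Sum>i=1..n. cellprob f t i) = 1"
    and z: "\<forall>x\<ge>0. 0 \<le> z x"
  shows "3/2 * (entropy n (cellprob f t) / ln 2) \<le> aoi_opt f n t z"
  unfolding aoi_opt_def
proof (rule cInf_greatest)
  show "{aoi f n t z l |l. is_code n l} \<noteq> {}"
    using is_code_constant[OF assms(1)] by blast
  fix y assume "y \<in> {aoi f n t z l |l. is_code n l}"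
  then obtain l where l: "is_code n l" "y = aoi f n t z l" by blast
  have "entropy n (cellprob f t) / ln 2 \<le> (\<Sum>i=1..n. cellprob f t i * l i)"
    using entropy_le_mean_length[OF assms(2,3) l(1)] by (simp add: divide_le_eq mult.commute)
  also have "3/2 * \<dots> \<le> y"
    unfolding l(2) by (rule aoi_ge_mean_length) (use assms l(1) in \<open>auto simp: is_code_def\<close>)
  finally show "3/2 * (entropy n (cellprob f t) / ln 2) \<le> y" by simp
qed

lemma aoi_opt_le_aoi:
  assumes "\<forall>i\<in>{1..n}. 0 \<le> cellprob f t i" "(\<Sum>i=1..n. cellprob f t i) = 1"
    and z: "\<forall>x\<ge>0. 0 \<le> z x" and l: "is_code n l"
  shows "aoi_opt f n t z \<le> aoi f n t z l"
  unfolding aoi_opt_def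
proof (rule cInf_lower)
  show "aoi f n t z l \<in> {aoi f n t z l |l. is_code n l}" using l by blast
  show "bdd_below {aoi f n t z l |l. is_code n l}"
  proof (rule bdd_belowI)
    fix y assume "y \<in> {aoi f n t z l |l. is_code n l}"
    then obtain l' where l': "is_code n l'" "y = aoi f n t z l'" by blast
    have "0 \<le> (\<Sum>i=1..n. cellprob f t i * l' i)"
      using assms(1) l'(1)
      by (intro sum_nonneg) (auto simp: is_code_def intro!: mult_nonneg_nonneg intro: less_imp_le)
    also have "3/2 * \<dots> \<le> y"
      unfolding l'(2) by (rule aoi_ge_mean_length) (use assms l'(1) in \<open>auto simp: is_code_def\<close>)
    finally show "0 \<le> y" by simp
  qed
qed

lemma zero_wait_aoi_le:
  assumes "(\<Sum>i=1..n. cellprob f t i) = 1" and L: "0 < (\<Sum>i=1..n. cellprob f t i * l i)"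
  shows "aoi f n t (\<lambda>_. 0) l
           \<le> 3/2 * (\<Sum>i=1..n. cellprob f t i * l i)
             + (\<Sum>i=1..n. cellprob f t i * (l i - c)^2) / (2 * (\<Sum>i=1..n. cellprob f t i * l i))"
proof -
  define P where "P = cellprob f t"
  define L where "L = (\<Sum>i=1..n. P i * l i)"
  define V where "V = (\<Sum>i=1..n. P i * (l i - c)^2)"
  have "(\<Sum>i=1..n. P i * (l i)^2) \<le> L^2 + V"
    using sum_weighted_square_diff[of P "{1..n}" l c] assms(1) by (simp add: P_def L_def V_def)
  hence "(\<Sum>i=1..n. P i * (l i)^2) / (2 * L) \<le> (L^2 + V) / (2 * L)"
    using L by (intro divide_right_mono) (auto simp: L_def P_def)
  also have "\<dots> = L / 2 + V / (2 * L)"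
    using L by (simp add: field_simps power2_eq_square L_def P_def)
  finally show ?thesis by (simp add: aoi_def P_def L_def V_def)
qed

section \<open>Quantizers of an interval\<close>

lemma quantizer_cell:
  assumes "is_quantizer a b n t" "i \<in> {1..n}"
  shows "a \<le> t (i - 1)" "t (i - 1) < t i" "t i \<le> b"
proof -
  have step: "\<forall>j<n. t j < t (Suc j)" and t0: "t 0 = a" and tn: "t n = b"
    using assms(1) by (auto simp: is_quantizer_def)
  have mono: "t j \<le> t k" if "j \<le> k" "k \<le> n" for j k
  proof (rule lift_Suc_mono_le_ivl[of "{..<n}"])
    show "\<And>m. m \<in> {..<n} \<Longrightarrow> t m \<le> t (Suc m)" using step by (simp add: less_imp_le)
  qed (use that in auto)
  show "a \<le> t (i - 1)" using mono[of 0 "i - 1"] t0 assms(2) by auto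
  show "t i \<le> b" using mono[of i n] tn assms(2) by simp
  obtain j where "i = Suc j" "j < n" using assms(2) by (cases i) auto
  thus "t (i - 1) < t i" using step by simp
qed
lemma sum_integral_quantizer_cells:
  fixes g :: "real \<Rightarrow> real"
  assumes q: "is_quantizer a b n t" and g: "g integrable_on {a..b}"
  shows "(\<Sum>i=1..n. integral {t (i - 1)..t i} g) = integral {a..b} g"
proof -
  have t0: "t 0 = a" and tn: "t n = b" using q by (auto simp: is_quantizer_def)
  have "(\<Sum>i=1..k. integral {t (i - 1)..t i} g) = integral {a..t k} g" if "k \<le> n" for k
    using that
  proof (induction k)
    case 0
    show ?case using t0 by simp
  next
    case (Suc k)
    have cell: "a \<le> t k" "t k \<le> t (Suc k)" "t (Suc k) \<le> b"
      using quantizer_cell[OF q, of "Suc k"] Suc.prems by auto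
    have ig: "g integrable_on {a..t (Suc k)}"
      by (rule integrable_on_subinterval[OF g]) (use cell in auto)
    have "(\<Sum>i=1..Suc k. integral {t (i - 1)..t i} g)
            = (\<Sum>i=1..k. integral {t (i - 1)..t i} g) + integral {t k..t (Suc k)} g"
      by simp
    also have "\<dots> = integral {a..t k} g + integral {t k..t (Suc k)} g"
      using Suc by simp
    also have "\<dots> = integral {a..t (Suc k)} g"
      by (rule Henstock_Kurzweil_Integration.integral_combine[OF cell(1,2) ig])
    finally show ?case .
  qed
  from this[of n] show ?thesis using tn by simp
qed

lemma sum_quantizer_cell_lengths:
  assumes "is_quantizer a b n t"
  shows "(\<Sum>i=1..n. t i - t (i - 1)) = b - a"
proof -
  have "(\<Sum>i=1..k. t i - t (i - 1)) = t k - t 0" for k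
    by (induction k) auto
  thus ?thesis using assms by (simp add: is_quantizer_def)
qed

lemma real_uni_n:
  assumes "a \<le> b" "0 < \<delta>"
  shows "real (uni_n a b \<delta>) = of_int \<lceil>(b - a) / \<delta>\<rceil>"
  using assms by (simp add: uni_n_def)

lemma uniform_quantizer:
  assumes "a < b" "0 < \<delta>"
  shows "is_quantizer a b (uni_n a b \<delta>) (uni_t a b \<delta>)"
  unfolding is_quantizer_def
proof (intro conjI allI impI)
  define N where "N = uni_n a b \<delta>"
  have N: "real N = of_int \<lceil>(b - a) / \<delta>\<rceil>"
    using real_uni_n assms by (simp add: N_def)
  have below_b: "a + real i * \<delta> < b" if "i < N" for i
  proof -
    have "int i < \<lceil>(b - a) / \<delta>\<rceil>" using that N by linarith
    hence "real i < (b - a) / \<delta>" by (simp add: less_ceiling_iff)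
    thus ?thesis using assms by (simp add: field_simps)
  qed
  have "(b - a) / \<delta> \<le> real N" using N by simp
  hence "b \<le> a + real N * \<delta>" using assms by (simp add: field_simps)
  thus "uni_t a b \<delta> (uni_n a b \<delta>) = b" by (simp add: uni_t_def N_def)
  have "N \<noteq> 0"
  proof
    assume "N = 0"
    with assms \<open>b \<le> a + real N * \<delta>\<close> show False by simp
  qed
  thus "1 \<le> uni_n a b \<delta>" by (simp add: N_def)
  show "uni_t a b \<delta> 0 = a" using assms by (simp add: uni_t_def)
  fix i assume "i < uni_n a b \<delta>"
  thus "uni_t a b \<delta> i < uni_t a b \<delta> (Suc i)"
    using below_b[of i] assms by (simp add: uni_t_def N_def algebra_simps)
qed

lemma uniform_cell_count_le:
  assumes "a < b" "0 < \<delta>"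
  shows "real (uni_n a b \<delta>) * \<delta> < b - a + \<delta>"
proof -
  have "real (uni_n a b \<delta>) < (b - a) / \<delta> + 1"
    using real_uni_n[of a b \<delta>] assms ceiling_correct[of "(b - a) / \<delta>"] by simp
  thus ?thesis using assms by (simp add: field_simps)
qed

lemma uniform_cell_length_le:
  assumes "0 \<le> \<delta>"
  shows "uni_t a b \<delta> i - uni_t a b \<delta> (i - 1) \<le> \<delta>"
proof (cases i)
  case (Suc j)
  have "uni_t a b \<delta> i = min ((a + real j * \<delta>) + \<delta>) b"
    using Suc by (simp add: uni_t_def algebra_simps)
  moreover have "uni_t a b \<delta> (i - 1) = min (a + real j * \<delta>) b"
    using Suc by (simp add: uni_t_def)
  moreover have "min (x + \<delta>) b - min x b \<le> \<delta>" for x :: real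
    using assms by linarith
  ultimately show ?thesis by metis
qed (use assms in simp)

lemma uniform_cell_count_ge_2:
  assumes "0 < \<delta>" "\<delta> < b - a"
  shows "2 \<le> uni_n a b \<delta>"
proof -
  have "1 < (b - a) / \<delta>" using assms by simp
  hence "1 < real (uni_n a b \<delta>)"
    using real_uni_n[of a b \<delta>] assms by (simp add: le_ceiling_iff)
  thus ?thesis by simp
qed

section \<open>Entropy of quantizers of a density with small distortion\<close>

locale interval_density =
  fixes f :: "real \<Rightarrow> real" and a b :: real
  assumes ab: "a < b"
    and nonneg: "\<And>x. 0 \<le> f x"
    and support: "closure {x. 0 < f x} = {a..b}"
    and pdf: "(f has_integral 1) {a..b}"
    and cont: "continuous_on {a..b} f"
    and integrable_f_ln_f: "(\<lambda>x. f x * ln (f x)) integrable_on {a..b}"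
begin

lemma density_zero_outside: "x \<notin> {a..b} \<Longrightarrow> f x = 0"
  using closure_subset[of "{x. 0 < f x}"] nonneg[of x] support by force

lemma density_pos_somewhere:
  assumes "open S" "S \<noteq> {}" "S \<subseteq> {a..b}"
  shows "\<exists>x\<in>S. 0 < f x"
proof -
  have "S \<inter> closure {x. 0 < f x} \<noteq> {}" using assms support by auto
  thus ?thesis using open_Int_closure_eq_empty[OF assms(1)] by blast
qed

lemma density_bounded: "\<exists>M\<ge>1. \<forall>x. f x \<le> M"
proof -
  obtain x where "\<forall>y\<in>{a..b}. f y \<le> f x"
    using continuous_attains_sup[OF compact_Icc _ cont] ab by fastforce
  hence "\<forall>y. f y \<le> max 1 (f x)"
    using density_zero_outside by (metis max.coboundedI2 max.cobounded1 nonneg order_trans)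
  thus ?thesis by (intro exI[of _ "max 1 (f x)"]) auto
qed

lemma density_uniformly_continuous:
  assumes "0 < e"
  obtains d where "0 < d"
    "\<And>x y. x \<in> {a..b} \<Longrightarrow> y \<in> {a..b} \<Longrightarrow> \<bar>x - y\<bar> < d \<Longrightarrow> \<bar>f x - f y\<bar> < e"
proof -
  have "uniformly_continuous_on {a..b} f"
    using compact_uniformly_continuous[OF cont] by simp
  then obtain d where "0 < d" "\<forall>x\<in>{a..b}. \<forall>y\<in>{a..b}. dist y x < d \<longrightarrow> dist (f y) (f x) < e"
    unfolding uniformly_continuous_on_def using assms by blast
  thus ?thesis using that by (auto simp: dist_real_def abs_minus_commute)
qed

lemma continuous_on_density: "a \<le> u \<Longrightarrow> v \<le> b \<Longrightarrow> continuous_on {u..v} f"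
  using cont by (rule continuous_on_subset) auto

lemma integrable_density: "a \<le> u \<Longrightarrow> v \<le> b \<Longrightarrow> f integrable_on {u..v}"
  using continuous_on_density integrable_continuous_real by blast

lemma integrable_moment:
  "a \<le> u \<Longrightarrow> v \<le> b \<Longrightarrow> (\<lambda>x. (x - c)^2 * f x) integrable_on {u..v}"
  by (intro integrable_continuous_real continuous_intros continuous_on_density)

lemma integrable_f_ln_f_cell:
  "a \<le> u \<Longrightarrow> v \<le> b \<Longrightarrow> (\<lambda>x. f x * ln (f x)) integrable_on {u..v}"
  using integrable_f_ln_f by (rule integrable_on_subinterval) auto

lemma cell_mass_pos:
  assumes "a \<le> u" "u < v" "v \<le> b"
  shows "0 < integral {u..v} f"
proof -
  have "\<exists>x\<in>{u<..<v}. 0 < f x"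
    by (rule density_pos_somewhere) (use assms in auto)
  then obtain x where x: "x \<in> {u<..<v}" "0 < f x" by blast
  have "0 \<le> integral {u..v} f"
    using assms by (intro integral_nonneg integrable_density) (auto simp: nonneg)
  moreover have "integral {u..v} f \<noteq> 0"
    using integral_eq_0_iff[OF continuous_on_density[OF assms(1,3)] assms(2)] x nonneg by auto
  ultimately show ?thesis by linarith
qed

lemma cell_moment_pos:
  assumes "a \<le> u" "u < v" "v \<le> b"
  shows "0 < integral {u..v} (\<lambda>x. (x - c)^2 * f x)"
proof -
  have "{u<..<v} - {c} \<noteq> {}"
    using assms by (metis finite.emptyI finite_insert infinite_Ioo insert_Diff_single
        rev_finite_subset subset_insert_iff)
  hence "\<exists>x\<in>{u<..<v} - {c}. 0 < f x"
    by (intro density_pos_somewhere) (use assms in auto)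
  then obtain x where x: "x \<in> {u<..<v} - {c}" "0 < f x" by blast
  have cont_moment: "continuous_on {u..v} (\<lambda>x. (x - c)^2 * f x)"
    using assms by (intro continuous_intros continuous_on_density) auto
  have "0 \<le> integral {u..v} (\<lambda>x. (x - c)^2 * f x)"
    using assms by (intro integral_nonneg integrable_moment) (auto simp: nonneg)
  moreover have "integral {u..v} (\<lambda>x. (x - c)^2 * f x) \<noteq> 0"
    using integral_eq_0_iff[OF cont_moment assms(2)] x nonneg by auto
  ultimately show ?thesis by linarith
qed

lemma cellprob_pos: "is_quantizer a b n t \<Longrightarrow> i \<in> {1..n} \<Longrightarrow> 0 < cellprob f t i"
  using quantizer_cell cell_mass_pos by (simp add: cellprob_def)

lemma sum_cellprob: "is_quantizer a b n t \<Longrightarrow> (\<Sum>i=1..n. cellprob f t i) = 1"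
  using sum_integral_quantizer_cells[of a b n t f] pdf integrable_density[of a b]
  by (simp add: cellprob_def integral_unique)

lemma distortion_pos:
  assumes "is_quantizer a b n t"
  shows "0 < distortion f n t c"
  unfolding distortion_def
proof (rule sum_pos)
  show "{1..n} \<noteq> {}" using assms by (simp add: is_quantizer_def)
  fix i assume "i \<in> {1..n}"
  with assms show "0 < integral {t (i - 1)..t i} (\<lambda>x. (x - c i)^2 * f x)"
    by (intro cell_moment_pos quantizer_cell)
qed simp

lemma aoi_opt_ge_quantizer_entropy:
  assumes "is_quantizer a b n t" "\<forall>x\<ge>0. 0 \<le> z x"
  shows "3/2 * (entropy n (cellprob f t) / ln 2) \<le> aoi_opt f n t z"
  using assms cellprob_pos sum_cellprob
  by (intro aoi_opt_ge_entropy) (auto simp: is_quantizer_def less_imp_le)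

lemma cell_cross_entropy_le:
  assumes cell: "a \<le> u" "u < v" "v \<le> b"
    and \<phi>: "continuous_on {u..v} \<phi>" "\<forall>x\<in>{u..v}. 0 < \<phi> x" "integral {u..v} \<phi> \<le> 1"
  defines "P \<equiv> integral {u..v} f"
  shows "integral {u..v} (\<lambda>x. f x * ln (\<phi> x))
           \<le> integral {u..v} (\<lambda>x. f x * ln (f x)) - P * ln P"
proof -
  have P: "0 < P" using cell_mass_pos[OF cell] by (simp add: P_def)
  have f: "f integrable_on {u..v}" using integrable_density cell by simp
  have f_ln_f: "(\<lambda>x. f x * ln (f x)) integrable_on {u..v}"
    using integrable_f_ln_f_cell cell by simp
  have f_ln_\<phi>: "(\<lambda>x. f x * ln (\<phi> x)) integrable_on {u..v}"
    using \<phi> continuous_on_density[OF cell(1,3)]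
    by (intro integrable_continuous_real continuous_intros) auto
  have \<phi>_int: "\<phi> integrable_on {u..v}" using \<phi>(1) integrable_continuous_real by blast
  have "integral {u..v} (\<lambda>x. f x * ln (\<phi> x) + f x - P * \<phi> x)
          \<le> integral {u..v} (\<lambda>x. f x * ln (f x) - f x * ln P)"
    using gibbs_pointwise_ge[OF nonneg P] \<phi>(2)
    by (intro integral_le integrable_diff integrable_add f f_ln_f f_ln_\<phi>
        integrable_on_mult_left integrable_on_mult_right \<phi>_int) auto
  hence "integral {u..v} (\<lambda>x. f x * ln (\<phi> x)) + P - P * integral {u..v} \<phi>
           \<le> integral {u..v} (\<lambda>x. f x * ln (f x)) - P * ln P"
    using f f_ln_f f_ln_\<phi> \<phi>_int
    by (simp add: integral_add integral_diff integrable_add integrable_on_mult_left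
        integrable_on_mult_right P_def mult.commute)
  moreover have "P * integral {u..v} \<phi> \<le> P" using P \<phi>(3) by (simp add: mult_left_le)
  ultimately show ?thesis by linarith
qed

lemma cell_entropy_ge_length:
  assumes "a \<le> u" "u < v" "v \<le> b"
  defines "P \<equiv> integral {u..v} f"
  shows "- P * ln (v - u) \<le> integral {u..v} (\<lambda>x. f x * ln (f x)) - P * ln P"
proof -
  have "integral {u..v} (\<lambda>x. f x * ln (1 / (v - u))) = - P * ln (v - u)"
    using assms by (simp add: ln_div P_def)
  moreover have "integral {u..v} (\<lambda>x. f x * ln ((\<lambda>_. 1 / (v - u)) x))
                   \<le> integral {u..v} (\<lambda>x. f x * ln (f x)) - P * ln P"
    unfolding P_def by (rule cell_cross_entropy_le) (use assms in auto)
  ultimately show ?thesis by simp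
qed

lemma cell_entropy_ge_cauchy:
  fixes c s :: real
  assumes cell: "a \<le> u" "u < v" "v \<le> b" and s: "0 < s"
  defines "P \<equiv> integral {u..v} f" and "D \<equiv> integral {u..v} (\<lambda>x. (x - c)^2 * f x)"
  shows "- ln (pi * s) * P - D / s^2 \<le> integral {u..v} (\<lambda>x. f x * ln (f x)) - P * ln P"
proof -
  have f: "f integrable_on {u..v}" and moment: "(\<lambda>x. (x - c)^2 * f x) integrable_on {u..v}"
    using integrable_density[OF cell(1,3)] integrable_moment[OF cell(1,3)] by auto
  have i1: "(\<lambda>x. - ln (pi * s) * f x) integrable_on {u..v}"
    using f by (rule integrable_on_mult_right)
  have i2: "(\<lambda>x. (x - c)^2 * f x / s^2) integrable_on {u..v}"
    using moment by (simp add: integrable_on_mult_left divide_inverse)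
  have "integral {u..v} (\<lambda>x. (x - c)^2 * f x / s^2) = D / s^2"
    by (simp add: D_def divide_inverse)
  hence "integral {u..v} (\<lambda>x. - ln (pi * s) * f x - (x - c)^2 * f x / s^2) = - ln (pi * s) * P - D / s^2"
    using i1 i2 by (simp add: integral_diff P_def)
  hence "- ln (pi * s) * P - D / s^2 = integral {u..v} (\<lambda>x. - ln (pi * s) * f x - (x - c)^2 * f x / s^2)"
    by (rule sym)
  also have "\<dots> \<le> integral {u..v} (\<lambda>x. f x * ln (cauchy_density c s x))"
  proof (rule integral_le)
    show "(\<lambda>x. - ln (pi * s) * f x - (x - c)^2 * f x / s^2) integrable_on {u..v}"
      using i1 i2 by (rule integrable_diff)
    have "cauchy_density c s x \<noteq> 0" for x
      using cauchy_density_pos[OF s] by (metis less_irrefl)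
    thus "(\<lambda>x. f x * ln (cauchy_density c s x)) integrable_on {u..v}"
      using continuous_on_density[OF cell(1,3)] s
      by (intro integrable_continuous_real continuous_intros continuous_on_cauchy_density) auto
    fix x
    show "- ln (pi * s) * f x - (x - c)^2 * f x / s^2 \<le> f x * ln (cauchy_density c s x)"
      using mult_left_mono[OF ln_cauchy_density_ge[OF s, of x c] nonneg[of x]]
      by (simp add: algebra_simps)
  qed
  also have "\<dots> \<le> integral {u..v} (\<lambda>x. f x * ln (f x)) - P * ln P"
    unfolding P_def using s cell
    by (intro cell_cross_entropy_le continuous_on_cauchy_density integral_cauchy_density_le_1)
      (auto simp: cauchy_density_pos)
  finally show ?thesis .
qed

lemma cell_entropy_ge_moment:
  fixes c :: real
  assumes cell: "a \<le> u" "u < v" "v \<le> b"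
  defines "P \<equiv> integral {u..v} f" and "D \<equiv> integral {u..v} (\<lambda>x. (x - c)^2 * f x)"
  shows "- (P / 2) * ln (12 * D / P) - (P / 2) * ln (pi^2 * exp 2 / 12)
           \<le> integral {u..v} (\<lambda>x. f x * ln (f x)) - P * ln P"
proof -
  have P: "0 < P" and D: "0 < D"
    using cell_mass_pos[OF cell] cell_moment_pos[OF cell] by (simp_all add: P_def D_def)
  (* the scale that maximises the bound of cell_entropy_ge_cauchy *)
  define s where "s = sqrt (D / P)"
  have s: "0 < s" "s^2 = D / P" using P D by (simp_all add: s_def)
  have ln_eq: "2 * ln (pi * s) + 2 = ln (pi^2 * exp 2 / 12) + ln (12 * D / P)"
  proof -
    have "pi^2 * exp 2 / 12 * (12 * D / P) = exp 2 * (pi * s)^2"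
      using s by (simp add: power_mult_distrib)
    hence "ln (pi^2 * exp 2 / 12) + ln (12 * D / P) = ln (exp 2 * (pi * s)^2)"
      using P D by (simp add: ln_mult_pos[symmetric])
    thus ?thesis using s by (simp add: ln_mult ln_realpow)
  qed
  have "D / s^2 = P" using s(2) P D by simp
  have "- (P / 2) * ln (12 * D / P) - (P / 2) * ln (pi^2 * exp 2 / 12)
          = - (P / 2) * (2 * ln (pi * s) + 2)"
    unfolding ln_eq by (simp add: algebra_simps)
  also have "\<dots> = - ln (pi * s) * P - D / s^2"
    using \<open>D / s^2 = P\<close> by (simp add: algebra_simps)
  also have "\<dots> \<le> integral {u..v} (\<lambda>x. f x * ln (f x)) - P * ln P"
    using cell_entropy_ge_cauchy[OF cell s(1)] by (simp add: P_def D_def)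
  finally show ?thesis .
qed

definition flat_cell :: "real \<Rightarrow> real \<Rightarrow> real \<Rightarrow> bool" where
  "flat_cell \<eta> u v \<longleftrightarrow> (\<forall>x\<in>{u..v}. \<forall>y\<in>{u..v}. f y \<le> (1 + \<eta>) * f x)"

lemma flat_cell_moment_ge:
  fixes c :: real
  assumes cell: "a \<le> u" "u < v" "v \<le> b" and \<eta>: "0 \<le> \<eta>" and flat: "flat_cell \<eta> u v"
  defines "P \<equiv> integral {u..v} f" and "D \<equiv> integral {u..v} (\<lambda>x. (x - c)^2 * f x)"
  shows "P * (v - u)^2 \<le> (1 + \<eta>)^2 * (12 * D)"
proof -
  have u: "u \<in> {u..v}" using cell by simp
  have "P \<le> integral {u..v} (\<lambda>x. (1 + \<eta>) * f u)"
    unfolding P_def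
    by (rule integral_le) (use integrable_density cell flat u in \<open>auto simp: flat_cell_def\<close>)
  hence P: "P \<le> (1 + \<eta>) * f u * (v - u)" using cell by (simp add: algebra_simps)
  have "integral {u..v} (\<lambda>x. f u / (1 + \<eta>) * (x - c)^2) \<le> D"
    unfolding D_def
  proof (rule integral_le)
    show "(\<lambda>x. f u / (1 + \<eta>) * (x - c)^2) integrable_on {u..v}"
      by (intro integrable_continuous_real continuous_intros)
    show "(\<lambda>x. (x - c)^2 * f x) integrable_on {u..v}" using integrable_moment cell by simp
    fix x assume "x \<in> {u..v}"
    hence "f u / (1 + \<eta>) \<le> f x"
      using flat u \<eta> by (simp add: flat_cell_def divide_simps mult.commute)
    hence "f u / (1 + \<eta>) * (x - c)^2 \<le> f x * (x - c)^2"
      by (rule mult_right_mono) simp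
    thus "f u / (1 + \<eta>) * (x - c)^2 \<le> (x - c)^2 * f x"
      by (simp only: mult.commute)
  qed
  moreover have "f u / (1 + \<eta>) * ((v - u)^3 / 12) \<le> integral {u..v} (\<lambda>x. f u / (1 + \<eta>) * (x - c)^2)"
    unfolding integral_mult_right
    using integral_power2_diff_ge[of u v c] cell \<eta> nonneg[of u] by (intro mult_left_mono) auto
  ultimately have D: "f u / (1 + \<eta>) * ((v - u)^3 / 12) \<le> D" by linarith
  have "P * (v - u)^2 \<le> (1 + \<eta>) * f u * (v - u) * (v - u)^2"
    using P by (intro mult_right_mono) auto
  also have "\<dots> = (1 + \<eta>)^2 * 12 * (f u / (1 + \<eta>) * ((v - u)^3 / 12))"
    using \<eta> by (simp add: power2_eq_square power3_eq_cube field_simps)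
  also have "\<dots> \<le> (1 + \<eta>)^2 * 12 * D" using D by (intro mult_left_mono) auto
  finally show ?thesis by simp
qed

lemma flat_cell_entropy_ge:
  fixes c :: real
  assumes cell: "a \<le> u" "u < v" "v \<le> b" and \<eta>: "0 \<le> \<eta>" and flat: "flat_cell \<eta> u v"
  defines "P \<equiv> integral {u..v} f" and "D \<equiv> integral {u..v} (\<lambda>x. (x - c)^2 * f x)"
  shows "- (P / 2) * ln (12 * D / P) - P * ln (1 + \<eta>)
           \<le> integral {u..v} (\<lambda>x. f x * ln (f x)) - P * ln P"
proof -
  have P: "0 < P" and D: "0 < D"
    using cell_mass_pos[OF cell] cell_moment_pos[OF cell] by (simp_all add: P_def D_def)
  have "(v - u)^2 \<le> (1 + \<eta>)^2 * (12 * D / P)"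
    using flat_cell_moment_ge[OF assms(1-5), of c] P by (simp add: P_def D_def field_simps)
  hence "ln ((v - u)^2) \<le> ln ((1 + \<eta>)^2 * (12 * D / P))"
    using cell by (intro ln_mono) auto
  moreover have "ln ((1 + \<eta>)^2 * (12 * D / P)) = 2 * ln (1 + \<eta>) + ln (12 * D / P)"
    using \<eta> P D by (subst ln_mult_pos) (auto simp: ln_realpow)
  moreover have "ln ((v - u)^2) = 2 * ln (v - u)" using cell by (simp add: ln_realpow)
  ultimately have "2 * ln (v - u) \<le> 2 * ln (1 + \<eta>) + ln (12 * D / P)" by linarith
  hence "P * ln (v - u) \<le> P * (ln (1 + \<eta>) + ln (12 * D / P) / 2)"
    using P by (intro mult_left_mono) auto
  thus ?thesis
    using cell_entropy_ge_length[OF cell] by (simp add: P_def D_def algebra_simps)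
qed

lemma cell_entropy_ge:
  fixes c :: real
  assumes cell: "a \<le> u" "u < v" "v \<le> b" and \<eta>: "0 \<le> \<eta>"
  defines "P \<equiv> integral {u..v} f" and "D \<equiv> integral {u..v} (\<lambda>x. (x - c)^2 * f x)"
  shows "- (P / 2) * ln (12 * D / P) - P * ln (1 + \<eta>)
           - (if flat_cell \<eta> u v then 0 else \<bar>ln (pi^2 * exp 2 / 12)\<bar> / 2 * P)
         \<le> integral {u..v} (\<lambda>x. f x * ln (f x)) - P * ln P"
proof (cases "flat_cell \<eta> u v")
  case True
  thus ?thesis using flat_cell_entropy_ge[OF cell \<eta> True] by (simp add: P_def D_def)
next
  case False
  define K where "K = ln (pi^2 * exp 2 / 12)"
  have "0 \<le> P" using cell_mass_pos[OF cell] by (simp add: P_def)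
  hence "P * K \<le> P * \<bar>K\<bar>" "0 \<le> P * ln (1 + \<eta>)"
    using \<eta> by (auto intro: mult_left_mono)
  hence "(P / 2) * K \<le> \<bar>K\<bar> / 2 * P + P * ln (1 + \<eta>)"
    by (simp add: mult.commute)
  with False show ?thesis using cell_entropy_ge_moment[OF cell, of c] by (simp add: P_def D_def K_def)
qed

lemma cell_mass_le_length:
  assumes "a \<le> u" "u \<le> v" "v \<le> b" "\<forall>x. f x \<le> M"
  shows "integral {u..v} f \<le> M * (v - u)"
proof -
  have "integral {u..v} f \<le> integral {u..v} (\<lambda>_. M)"
    using assms by (intro integral_le integrable_density) auto
  thus ?thesis using assms by (simp add: mult.commute)
qed

lemma cell_mass_le_moment:
  fixes c s M :: real
  assumes cell: "a \<le> u" "u \<le> v" "v \<le> b" and s: "0 < s" and M: "\<forall>x. f x \<le> M"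
  shows "integral {u..v} f \<le> integral {u..v} (\<lambda>x. (x - c)^2 * f x) / s^2 + 2 * s * M"
proof -
  define g where "g x = (x - c)^2 * f x / s^2" for x
  define u' where "u' = max u (min v (c - s))"
  define v' where "v' = max u' (min v (c + s))"
  have split: "u \<le> u'" "u' \<le> v'" "v' \<le> v" unfolding u'_def v'_def using cell by auto
  have f_int: "f integrable_on {p..q}" if "u \<le> p" "q \<le> v" for p q
    using integrable_density cell that by simp
  have g_int: "g integrable_on {p..q}" if "u \<le> p" "q \<le> v" for p q
    unfolding g_def using cell that s
    by (intro integrable_continuous_real continuous_intros continuous_on_density) auto
  have f_le_g: "f x \<le> g x" if "s \<le> \<bar>x - c\<bar>" for x
    unfolding g_def using le_moment_weight[OF s that nonneg] .
  have left: "integral {u..u'} f \<le> integral {u..u'} g"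
  proof (cases "u' = u")
    case False
    hence "u' \<le> c - s" unfolding u'_def by auto
    thus ?thesis using split f_le_g by (intro integral_le f_int g_int) auto
  qed simp
  have right: "integral {v'..v} f \<le> integral {v'..v} g"
  proof (cases "v' = v")
    case False
    hence "c + s \<le> v'" unfolding v'_def u'_def using split by (auto simp: max_def min_def split: if_splits)
    thus ?thesis using split f_le_g by (intro integral_le f_int g_int) auto
  qed simp
  have "integral {u'..v'} f \<le> M * (v' - u')"
    using split M by (intro cell_mass_le_length) (use cell in auto)
  also have "\<dots> \<le> M * (2 * s)"
  proof (rule mult_left_mono)
    show "v' - u' \<le> 2 * s"
      unfolding v'_def u'_def using s by (auto simp: max_def min_def split: if_splits)
    show "0 \<le> M" using M nonneg order_trans by blast
  qed
  finally have middle: "integral {u'..v'} f \<le> 2 * s * M" by (simp add: mult.commute)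
  have "0 \<le> integral {u'..v'} g"
    using split s nonneg by (intro integral_nonneg g_int) (auto simp: g_def)
  hence "integral {u..v} f \<le> integral {u..v} g + 2 * s * M"
    using integral_split3[OF split f_int] integral_split3[OF split g_int] left middle right
    by simp
  also have "integral {u..v} g = integral {u..v} (\<lambda>x. (x - c)^2 * f x) / s^2"
    unfolding g_def by (simp add: divide_inverse)
  finally show ?thesis .
qed

lemma cell_moment_le_distortion:
  assumes "is_quantizer a b n t" "i \<in> {1..n}"
  shows "integral {t (i - 1)..t i} (\<lambda>x. (x - c i)^2 * f x) \<le> distortion f n t c"
  unfolding distortion_def
  using assms cell_moment_pos quantizer_cell[OF assms(1)]
  by (intro member_le_sum) (auto intro: less_imp_le)

lemma non_flat_cell_mass_le:
  assumes cell: "a \<le> u" "u < v" "v \<le> b" and short: "v - u < r" and \<eta>: "0 < \<eta>" "\<eta> \<le> 1"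
    and modulus:
      "\<And>x y. x \<in> {a..b} \<Longrightarrow> y \<in> {a..b} \<Longrightarrow> \<bar>x - y\<bar> < r \<Longrightarrow> \<bar>f x - f y\<bar> < \<eta> * m"
    and not_flat: "\<not> flat_cell \<eta> u v"
  shows "integral {u..v} f \<le> 2 * m * (v - u)"
proof -
  obtain x y where xy: "x \<in> {u..v}" "y \<in> {u..v}" "(1 + \<eta>) * f x < f y"
    using not_flat by (auto simp: flat_cell_def not_le)
  have close: "\<bar>f z - f x\<bar> < \<eta> * m" if "z \<in> {u..v}" for z
    using modulus[of z x] that xy(1) cell short by auto
  from close[OF xy(2)] xy(3) have "\<eta> * f x < \<eta> * m" by (auto simp: abs_less_iff algebra_simps)
  with \<eta> have fx: "f x < m" by simp
  have "f z \<le> 2 * m" if "z \<in> {u..v}" for z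
  proof -
    have "\<eta> * m \<le> m"
      using fx nonneg[of x] \<eta> by (intro mult_left_le_one_le) auto
    thus ?thesis using close[OF that] fx by linarith
  qed
  hence "integral {u..v} f \<le> integral {u..v} (\<lambda>_. 2 * m)"
    using cell by (intro integral_le integrable_density) auto
  thus ?thesis using cell by (simp add: algebra_simps)
qed

lemma non_flat_cell_mass_le_length:
  assumes cell: "a \<le> u" "u < v" "v \<le> b" and \<eta>: "0 < \<eta>" "\<eta> \<le> 1" and \<kappa>: "0 < \<kappa>"
    and modulus:
      "\<And>x y. x \<in> {a..b} \<Longrightarrow> y \<in> {a..b} \<Longrightarrow> \<bar>x - y\<bar> < r \<Longrightarrow> \<bar>f x - f y\<bar> < \<eta> * (\<kappa> / 2)"
    and M: "\<forall>x. f x \<le> M" and s: "0 < s" "2 * s * M \<le> \<kappa> * r / 2"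
    and moment: "integral {u..v} (\<lambda>x. (x - c)^2 * f x) \<le> s^2 * (\<kappa> * r / 2)"
    and not_flat: "\<not> flat_cell \<eta> u v"
  shows "integral {u..v} f \<le> \<kappa> * (v - u)"
proof (cases "v - u < r")
  case True
  thus ?thesis using non_flat_cell_mass_le[OF cell True \<eta> modulus not_flat] by simp
next
  case False
  have "integral {u..v} f \<le> integral {u..v} (\<lambda>x. (x - c)^2 * f x) / s^2 + 2 * s * M"
    using cell s M by (intro cell_mass_le_moment) auto
  also have "\<dots> \<le> \<kappa> * r"
  proof -
    have "integral {u..v} (\<lambda>x. (x - c)^2 * f x) / s^2 \<le> \<kappa> * r / 2"
      using moment s by (simp add: divide_le_eq mult.commute)
    thus ?thesis using s(2) by linarith
  qed
  also have "\<dots> \<le> \<kappa> * (v - u)"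
    using False \<kappa> by simp
  finally show ?thesis .
qed

lemma non_flat_mass_le:
  assumes \<eta>: "0 < \<eta>" "\<eta> \<le> 1" and \<epsilon>: "0 < \<epsilon>"
  obtains D0 where "0 < D0"
    "\<And>n t c. is_quantizer a b n t \<Longrightarrow> distortion f n t c \<le> D0 \<Longrightarrow>
       (\<Sum>i\<in>{i\<in>{1..n}. \<not> flat_cell \<eta> (t (i - 1)) (t i)}. cellprob f t i) \<le> \<epsilon>"
proof -
  obtain M where M: "1 \<le> M" "\<forall>x. f x \<le> M" using density_bounded by auto
  define \<kappa> where "\<kappa> = \<epsilon> / (b - a)"
  have \<kappa>: "0 < \<kappa>" using \<epsilon> ab by (simp add: \<kappa>_def)
  obtain r where r: "0 < r"
    "\<And>x y. x \<in> {a..b} \<Longrightarrow> y \<in> {a..b} \<Longrightarrow> \<bar>x - y\<bar> < r \<Longrightarrow> \<bar>f x - f y\<bar> < \<eta> * (\<kappa> / 2)"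
    using density_uniformly_continuous[of "\<eta> * (\<kappa> / 2)"] \<eta> \<kappa> by auto
  define s where "s = \<kappa> * r / (4 * M)"
  have s: "0 < s" "2 * s * M \<le> \<kappa> * r / 2" using \<kappa> r M by (simp_all add: s_def)
  show thesis
  proof (rule that)
    show "0 < s^2 * (\<kappa> * r / 2)" using s \<kappa> r by simp
    fix n t c assume q: "is_quantizer a b n t" and D: "distortion f n t c \<le> s^2 * (\<kappa> * r / 2)"
    have "cellprob f t i \<le> \<kappa> * (t i - t (i - 1))"
      if i: "i \<in> {1..n}" "\<not> flat_cell \<eta> (t (i - 1)) (t i)" for i
    proof -
      have "integral {t (i - 1)..t i} (\<lambda>x. (x - c i)^2 * f x) \<le> s^2 * (\<kappa> * r / 2)"
        using cell_moment_le_distortion[OF q i(1), of c] D by simp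
      from non_flat_cell_mass_le_length[OF quantizer_cell[OF q i(1)] \<eta> \<kappa> r(2) M(2) s this i(2)]
      show ?thesis by (simp add: cellprob_def)
    qed
    hence "(\<Sum>i\<in>{i\<in>{1..n}. \<not> flat_cell \<eta> (t (i - 1)) (t i)}. cellprob f t i)
            \<le> (\<Sum>i\<in>{i\<in>{1..n}. \<not> flat_cell \<eta> (t (i - 1)) (t i)}. \<kappa> * (t i - t (i - 1)))"
      by (intro sum_mono) auto
    also have "\<dots> \<le> (\<Sum>i=1..n. \<kappa> * (t i - t (i - 1)))"
      using quantizer_cell[OF q] \<kappa> by (intro sum_mono2) (auto intro: less_imp_le)
    also have "\<dots> = \<kappa> * (b - a)"
      using sum_quantizer_cell_lengths[OF q] by (simp add: sum_distrib_left[symmetric])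
    also have "\<dots> = \<epsilon>"
      using ab by (simp add: \<kappa>_def)
    finally show "(\<Sum>i\<in>{i\<in>{1..n}. \<not> flat_cell \<eta> (t (i - 1)) (t i)}. cellprob f t i) \<le> \<epsilon>" .
  qed
qed

definition differential_entropy :: real where
  "differential_entropy = - integral {a..b} (\<lambda>x. f x * ln (f x))"

lemma sum_cellprob_ln_moment_le:
  assumes q: "is_quantizer a b n t"
  shows "(\<Sum>i=1..n. cellprob f t i * ln (12 * integral {t (i - 1)..t i} (\<lambda>x. (x - c i)^2 * f x) / cellprob f t i))
           \<le> ln (12 * distortion f n t c)"
proof -
  define P where "P = cellprob f t"
  define Dc where "Dc i = integral {t (i - 1)..t i} (\<lambda>x. (x - c i)^2 * f x)" for i
  have P: "0 < P i" if "i \<in> {1..n}" for i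
    using cellprob_pos[OF q that] by (simp add: P_def)
  have Dc: "0 < Dc i" if "i \<in> {1..n}" for i
    using cell_moment_pos quantizer_cell[OF q that] by (simp add: Dc_def)
  have "(\<Sum>i=1..n. P i * ln (12 * Dc i / P i)) \<le> ln (\<Sum>i=1..n. P i * (12 * Dc i / P i))"
    using P Dc sum_cellprob[OF q] by (intro sum_mult_ln_le_ln_sum) (auto simp: P_def)
  also have "(\<Sum>i=1..n. P i * (12 * Dc i / P i)) = (\<Sum>i=1..n. 12 * Dc i)"
    by (rule sum.cong) (use P in \<open>auto simp: less_imp_neq[symmetric]\<close>)
  also have "\<dots> = 12 * distortion f n t c"
    by (simp add: distortion_def Dc_def sum_distrib_left)
  finally show ?thesis by (simp add: P_def Dc_def)
qed

lemma quantizer_entropy_ge_non_flat_mass: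
  fixes c :: "nat \<Rightarrow> real"
  assumes q: "is_quantizer a b n t" and \<eta>: "0 \<le> \<eta>"
  defines "K \<equiv> \<bar>ln (pi^2 * exp 2 / 12)\<bar>"
  shows "differential_entropy - ln (12 * distortion f n t c) / 2 - ln (1 + \<eta>)
           - K / 2 * (\<Sum>i\<in>{i\<in>{1..n}. \<not> flat_cell \<eta> (t (i - 1)) (t i)}. cellprob f t i)
         \<le> entropy n (cellprob f t)"
proof -
  define P where "P = cellprob f t"
  define Dc where "Dc i = integral {t (i - 1)..t i} (\<lambda>x. (x - c i)^2 * f x)" for i
  define E where "E i = integral {t (i - 1)..t i} (\<lambda>x. f x * ln (f x))" for i
  define bad where "bad = {i\<in>{1..n}. \<not> flat_cell \<eta> (t (i - 1)) (t i)}"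
  have cell_bound: "- (P i / 2) * ln (12 * Dc i / P i) - P i * ln (1 + \<eta>)
                      - (if i \<in> bad then K / 2 * P i else 0)
                    \<le> E i - P i * ln (P i)" if i: "i \<in> {1..n}" for i
    using cell_entropy_ge[OF quantizer_cell[OF q i] \<eta>, of "c i"] i
    unfolding P_def Dc_def E_def bad_def K_def cellprob_def by auto
  have "- (\<Sum>i=1..n. P i * ln (12 * Dc i / P i)) / 2 - ln (1 + \<eta>) - K / 2 * (\<Sum>i\<in>bad. P i)
          = (\<Sum>i=1..n. - (P i / 2) * ln (12 * Dc i / P i) - P i * ln (1 + \<eta>)
                        - (if i \<in> bad then K / 2 * P i else 0))"
  proof -
    have "(\<Sum>i=1..n. - (P i / 2) * ln (12 * Dc i / P i)) = - (\<Sum>i=1..n. P i * ln (12 * Dc i / P i)) / 2"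
      by (simp add: sum_negf sum_divide_distrib)
    moreover have "(\<Sum>i=1..n. P i * ln (1 + \<eta>)) = ln (1 + \<eta>)"
      using sum_cellprob[OF q] by (simp add: sum_distrib_right[symmetric] P_def)
    moreover have "{1..n} \<inter> bad = bad" by (auto simp: bad_def)
    hence "(\<Sum>i=1..n. if i \<in> bad then K / 2 * P i else 0) = K / 2 * (\<Sum>i\<in>bad. P i)"
      using sum.inter_restrict[of "{1..n}" "\<lambda>i. K / 2 * P i" bad] by (simp add: sum_distrib_left)
    ultimately show ?thesis by (simp only: sum_subtractf)
  qed
  also have "\<dots> \<le> (\<Sum>i=1..n. E i - P i * ln (P i))"
    using cell_bound by (rule sum_mono)
  also have "\<dots> = integral {a..b} (\<lambda>x. f x * ln (f x)) + entropy n P"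
    using sum_integral_quantizer_cells[OF q integrable_f_ln_f]
    by (simp add: E_def entropy_def sum_subtractf sum_negf)
  finally have "- (\<Sum>i=1..n. P i * ln (12 * Dc i / P i)) / 2 - ln (1 + \<eta>) - K / 2 * (\<Sum>i\<in>bad. P i)
                  \<le> integral {a..b} (\<lambda>x. f x * ln (f x)) + entropy n P" .
  moreover have "(\<Sum>i=1..n. P i * ln (12 * Dc i / P i)) \<le> ln (12 * distortion f n t c)"
    using sum_cellprob_ln_moment_le[OF q] by (simp add: P_def Dc_def)
  ultimately show ?thesis by (simp add: P_def bad_def differential_entropy_def)
qed

lemma quantizer_entropy_ge:
  assumes \<rho>: "0 < \<rho>"
  obtains D0 where "0 < D0"
    "\<And>n t c. is_quantizer a b n t \<Longrightarrow> distortion f n t c \<le> D0 \<Longrightarrow>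
       differential_entropy - ln (12 * distortion f n t c) / 2 - \<rho> \<le> entropy n (cellprob f t)"
proof -
  define K where "K = \<bar>ln (pi^2 * exp 2 / 12)\<bar>"
  define \<eta> where "\<eta> = min 1 (exp (\<rho> / 2) - 1)"
  have \<eta>: "0 < \<eta>" "\<eta> \<le> 1" using \<rho> by (auto simp: \<eta>_def)
  have "1 + \<eta> \<le> exp (\<rho> / 2)" by (simp add: \<eta>_def)
  hence ln_\<eta>: "ln (1 + \<eta>) \<le> \<rho> / 2"
    using \<eta> ln_mono[of "1 + \<eta>" "exp (\<rho> / 2)"] by simp
  have K: "0 \<le> K" by (simp add: K_def)
  obtain D0 where D0: "0 < D0" and non_flat:
    "\<And>n t c. is_quantizer a b n t \<Longrightarrow> distortion f n t c \<le> D0 \<Longrightarrow>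
       (\<Sum>i\<in>{i\<in>{1..n}. \<not> flat_cell \<eta> (t (i - 1)) (t i)}. cellprob f t i) \<le> \<rho> / (K + 1)"
    using non_flat_mass_le[OF \<eta>, of "\<rho> / (K + 1)"] \<rho> K by auto
  show thesis
  proof (rule that[OF D0])
    fix n t c assume q: "is_quantizer a b n t" and D: "distortion f n t c \<le> D0"
    have "K / 2 * (\<Sum>i\<in>{i\<in>{1..n}. \<not> flat_cell \<eta> (t (i - 1)) (t i)}. cellprob f t i)
            \<le> K / 2 * (\<rho> / (K + 1))"
      using non_flat[OF q D] K by (intro mult_left_mono) auto
    also have "\<dots> \<le> \<rho> / 2" using K \<rho> by (simp add: field_simps)
    finally show "differential_entropy - ln (12 * distortion f n t c) / 2 - \<rho> \<le> entropy n (cellprob f t)"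
      using quantizer_entropy_ge_non_flat_mass[OF q less_imp_le[OF \<eta>(1)], of c] ln_\<eta>
      unfolding K_def by linarith
  qed
qed

section \<open>The uniform quantizer\<close>

lemma density_le_cell_average:
  assumes cell: "a \<le> u" "u < v" "v \<le> b"
    and flat: "\<And>x y. x \<in> {u..v} \<Longrightarrow> y \<in> {u..v} \<Longrightarrow> f y \<le> f x + \<epsilon>"
    and x: "x \<in> {u..v}"
  shows "f x \<le> integral {u..v} f / (v - u) + \<epsilon>"
proof -
  have "integral {u..v} (\<lambda>_. f x - \<epsilon>) \<le> integral {u..v} f"
    using flat[OF _ x] cell by (intro integral_le integrable_density) (auto simp: algebra_simps)
  thus ?thesis using cell by (simp add: field_simps)
qed

lemma cell_entropy_le:
  assumes cell: "a \<le> u" "u < v" "v \<le> b" and \<delta>: "0 < \<delta>"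
    and flat: "\<And>x y. x \<in> {u..v} \<Longrightarrow> y \<in> {u..v} \<Longrightarrow> f y \<le> f x + \<epsilon>"
  defines "P \<equiv> integral {u..v} f"
  shows "integral {u..v} (\<lambda>x. f x * ln (f x)) - P * ln (P / \<delta>) \<le> \<delta> * (P / (v - u) + \<epsilon>) - P"
proof -
  have P: "0 < P" using cell_mass_pos[OF cell] by (simp add: P_def)
  define K where "K = P / (v - u) + \<epsilon>"
  have f: "f integrable_on {u..v}" using integrable_density cell by simp
  have "integral {u..v} (\<lambda>x. f x * ln (f x) - f x * ln (P / \<delta>))
          \<le> integral {u..v} (\<lambda>x. f x * (K * \<delta> / P) - f x)"
  proof (rule integral_le)
    show "(\<lambda>x. f x * ln (f x) - f x * ln (P / \<delta>)) integrable_on {u..v}"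
      using integrable_f_ln_f_cell cell f by (intro integrable_diff integrable_on_mult_left) auto
    show "(\<lambda>x. f x * (K * \<delta> / P) - f x) integrable_on {u..v}"
      using f by (intro integrable_diff integrable_on_mult_left)
    fix x assume x: "x \<in> {u..v}"
    have "f x * ln (f x) - f x * ln (P / \<delta>) \<le> f x * f x / (P / \<delta>) - f x"
      using P \<delta> by (intro gibbs_pointwise_le nonneg) auto
    also have "f x * f x \<le> f x * K"
      using density_le_cell_average[OF cell flat x] nonneg[of x]
      by (intro mult_left_mono) (auto simp: K_def P_def)
    finally show "f x * ln (f x) - f x * ln (P / \<delta>) \<le> f x * (K * \<delta> / P) - f x"
      using P \<delta> by (simp add: divide_right_mono field_simps)
  qed
  moreover have "integral {u..v} (\<lambda>x. f x * ln (f x) - f x * ln (P / \<delta>))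
                   = integral {u..v} (\<lambda>x. f x * ln (f x)) - P * ln (P / \<delta>)"
    using integrable_f_ln_f_cell cell f by (simp add: integral_diff integrable_on_mult_left P_def)
  moreover have "integral {u..v} (\<lambda>x. f x * (K * \<delta> / P) - f x) = K * \<delta> - P"
    using f P by (simp add: integral_diff integrable_on_mult_left P_def)
  ultimately show ?thesis by (simp add: K_def mult.commute)
qed

lemma cell_midpoint_moment_le:
  assumes cell: "a \<le> u" "u < v" "v \<le> b"
    and flat: "\<And>x y. x \<in> {u..v} \<Longrightarrow> y \<in> {u..v} \<Longrightarrow> f y \<le> f x + \<epsilon>"
  shows "integral {u..v} (\<lambda>x. (x - (u + v) / 2)^2 * f x)
           \<le> (integral {u..v} f / (v - u) + \<epsilon>) * ((v - u)^3 / 12)"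
proof -
  define K where "K = integral {u..v} f / (v - u) + \<epsilon>"
  have "integral {u..v} (\<lambda>x. (x - (u + v) / 2)^2 * f x) \<le> integral {u..v} (\<lambda>x. K * (x - (u + v) / 2)^2)"
  proof (rule integral_le)
    show "(\<lambda>x. (x - (u + v) / 2)^2 * f x) integrable_on {u..v}"
      using integrable_moment cell by simp
    show "(\<lambda>x. K * (x - (u + v) / 2)^2) integrable_on {u..v}"
      by (intro integrable_continuous_real continuous_intros)
    fix x assume "x \<in> {u..v}"
    hence "f x \<le> K" using density_le_cell_average[OF cell flat] by (simp add: K_def)
    hence "f x * (x - (u + v) / 2)^2 \<le> K * (x - (u + v) / 2)^2"
      by (rule mult_right_mono) simp
    thus "(x - (u + v) / 2)^2 * f x \<le> K * (x - (u + v) / 2)^2"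
      by (simp only: mult.commute)
  qed
  also have "\<dots> = K * ((v - u)^3 / 12)"
    using integral_power2_diff_midpoint[of u v] cell by simp
  finally show ?thesis by (simp add: K_def)
qed

definition uniform_entropy :: "real \<Rightarrow> real" where
  "uniform_entropy \<delta> = entropy (uni_n a b \<delta>) (cellprob f (uni_t a b \<delta>))"

definition uniform_distortion :: "real \<Rightarrow> real" where
  "uniform_distortion \<delta> = distortion f (uni_n a b \<delta>) (uni_t a b \<delta>) (uni_c a b \<delta>)"

definition oscillation_le :: "real \<Rightarrow> real \<Rightarrow> bool" where
  "oscillation_le \<delta> \<epsilon> \<longleftrightarrow> (\<forall>x\<in>{a..b}. \<forall>y\<in>{a..b}. \<bar>x - y\<bar> \<le> \<delta> \<longrightarrow> f y \<le> f x + \<epsilon>)"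

lemma uniform_cell_flat:
  assumes \<delta>: "0 < \<delta>" and i: "i \<in> {1..uni_n a b \<delta>}"
    and flat: "oscillation_le \<delta> \<epsilon>"
    and xy: "x \<in> {uni_t a b \<delta> (i - 1)..uni_t a b \<delta> i}" "y \<in> {uni_t a b \<delta> (i - 1)..uni_t a b \<delta> i}"
  shows "f y \<le> f x + \<epsilon>"
proof (rule flat[unfolded oscillation_le_def, rule_format])
  show "x \<in> {a..b}" "y \<in> {a..b}"
    using xy quantizer_cell[OF uniform_quantizer[OF ab \<delta>] i] by auto
  show "\<bar>x - y\<bar> \<le> \<delta>"
    using xy uniform_cell_length_le[of \<delta> a b i] \<delta> by auto
qed

lemma uniform_cell_entropy_le:
  assumes \<delta>: "0 < \<delta>" and M: "\<forall>x. f x \<le> M" and i: "i \<in> {1..uni_n a b \<delta>}"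
    and flat: "oscillation_le \<delta> \<epsilon>"
  defines "t \<equiv> uni_t a b \<delta>"
  defines "P \<equiv> cellprob f t i" and "len \<equiv> t i - t (i - 1)"
  shows "integral {t (i - 1)..t i} (\<lambda>x. f x * ln (f x)) - P * ln P + P * ln \<delta>
           \<le> M * (\<delta> - len) + \<delta> * \<epsilon>"
proof -
  note cell = quantizer_cell[OF uniform_quantizer[OF ab \<delta>] i, folded t_def]
  have len: "0 < len" "len \<le> \<delta>"
    using cell uniform_cell_length_le[of \<delta> a b i] \<delta> by (auto simp: len_def t_def)
  have P: "0 < P" using cellprob_pos[OF uniform_quantizer[OF ab \<delta>] i] by (simp add: P_def t_def)
  have "integral {t (i - 1)..t i} (\<lambda>x. f x * ln (f x)) - P * ln (P / \<delta>) \<le> \<delta> * (P / len + \<epsilon>) - P"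
    unfolding P_def cellprob_def len_def
    using uniform_cell_flat[OF \<delta> i flat] by (intro cell_entropy_le cell \<delta>) (auto simp: t_def)
  moreover have "ln (P / \<delta>) = ln P - ln \<delta>" using P \<delta> by (simp add: ln_div)
  moreover have "\<delta> * (P / len) - P \<le> M * (\<delta> - len)"
  proof -
    have "P \<le> M * len"
      using cell_mass_le_length[of "t (i - 1)" "t i" M] cell M by (simp add: P_def cellprob_def len_def)
    hence "P * (\<delta> - len) / len \<le> M * len * (\<delta> - len) / len"
      using len by (intro divide_right_mono mult_right_mono) auto
    moreover have "\<delta> * (P / len) - P = P * (\<delta> - len) / len"
      using len by (simp add: field_simps)
    ultimately show ?thesis using len by simp
  qed
  ultimately show ?thesis by (simp add: algebra_simps)
qed

lemma uniform_entropy_le: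
  assumes \<delta>: "0 < \<delta>" and \<epsilon>: "0 \<le> \<epsilon>" and M: "\<forall>x. f x \<le> M"
    and flat: "oscillation_le \<delta> \<epsilon>"
  shows "uniform_entropy \<delta> \<le> differential_entropy - ln \<delta> + (b - a + \<delta>) * \<epsilon> + M * \<delta>"
proof -
  define N where "N = uni_n a b \<delta>"
  define t where "t = uni_t a b \<delta>"
  define P where "P = cellprob f t"
  define E where "E i = integral {t (i - 1)..t i} (\<lambda>x. f x * ln (f x))" for i
  define len where "len i = t i - t (i - 1)" for i
  have q: "is_quantizer a b N t" using uniform_quantizer[OF ab \<delta>] by (simp add: N_def t_def)
  have M0: "0 \<le> M" using M nonneg order_trans by blast
  have "- differential_entropy + uniform_entropy \<delta> + ln \<delta>
          = (\<Sum>i=1..N. E i - P i * ln (P i) + P i * ln \<delta>)"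
    using sum_integral_quantizer_cells[OF q integrable_f_ln_f] sum_cellprob[OF q]
    by (simp add: sum.distrib sum_subtractf sum_negf sum_distrib_right[symmetric] E_def P_def
        differential_entropy_def uniform_entropy_def entropy_def N_def t_def)
  also have "\<dots> \<le> (\<Sum>i=1..N. M * (\<delta> - len i) + \<delta> * \<epsilon>)"
    using uniform_cell_entropy_le[OF \<delta> M _ flat]
    by (intro sum_mono) (simp add: E_def P_def len_def N_def t_def)
  also have "\<dots> = real N * (M * \<delta> + \<delta> * \<epsilon>) - M * (\<Sum>i=1..N. len i)"
    by (simp add: sum.distrib sum_subtractf sum_distrib_left[symmetric] algebra_simps)
  also have "(\<Sum>i=1..N. len i) = b - a"
    using sum_quantizer_cell_lengths[OF q] by (simp add: len_def)
  also have "real N * (M * \<delta> + \<delta> * \<epsilon>) - M * (b - a) \<le> M * \<delta> + (b - a + \<delta>) * \<epsilon>"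
  proof -
    have "real N * \<delta> \<le> b - a + \<delta>" using uniform_cell_count_le[OF ab \<delta>] by (simp add: N_def)
    hence "M * (real N * \<delta>) \<le> M * (b - a + \<delta>)" "real N * \<delta> * \<epsilon> \<le> (b - a + \<delta>) * \<epsilon>"
      using M0 \<epsilon> by (auto intro: mult_left_mono mult_right_mono)
    thus ?thesis by (simp add: algebra_simps)
  qed
  finally show ?thesis by simp
qed

lemma uniform_cell_moment_le:
  assumes \<delta>: "0 < \<delta>" and \<epsilon>: "0 \<le> \<epsilon>" and i: "i \<in> {1..uni_n a b \<delta>}"
    and flat: "oscillation_le \<delta> \<epsilon>"
  defines "t \<equiv> uni_t a b \<delta>"
  defines "len \<equiv> t i - t (i - 1)"
  shows "12 * integral {t (i - 1)..t i} (\<lambda>x. (x - uni_c a b \<delta> i)^2 * f x)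
           \<le> \<delta>^2 * (cellprob f t i + \<epsilon> * len)"
proof -
  note cell = quantizer_cell[OF uniform_quantizer[OF ab \<delta>] i, folded t_def]
  have len: "0 < len" "len \<le> \<delta>"
    using cell uniform_cell_length_le[of \<delta> a b i] \<delta> by (auto simp: len_def t_def)
  have "integral {t (i - 1)..t i} (\<lambda>x. (x - uni_c a b \<delta> i)^2 * f x)
          \<le> (cellprob f t i / len + \<epsilon>) * (len^3 / 12)"
    unfolding uni_c_def t_def[symmetric] cellprob_def len_def
    using uniform_cell_flat[OF \<delta> i flat] by (intro cell_midpoint_moment_le cell) (auto simp: t_def)
  also have "\<dots> = (cellprob f t i + \<epsilon> * len) * len^2 / 12"
    using len by (simp add: field_simps power2_eq_square power3_eq_cube)
  also have "\<dots> \<le> (cellprob f t i + \<epsilon> * len) * \<delta>^2 / 12"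
    using len \<epsilon> cellprob_pos[OF uniform_quantizer[OF ab \<delta>] i]
    by (intro divide_right_mono mult_left_mono power_mono) (auto simp: t_def)
  finally show ?thesis by (simp add: algebra_simps)
qed

lemma uniform_distortion_le:
  assumes \<delta>: "0 < \<delta>" and \<epsilon>: "0 \<le> \<epsilon>"
    and flat: "oscillation_le \<delta> \<epsilon>"
  shows "12 * uniform_distortion \<delta> \<le> \<delta>^2 * (1 + \<epsilon> * (b - a))"
proof -
  define N where "N = uni_n a b \<delta>"
  define t where "t = uni_t a b \<delta>"
  define len where "len i = t i - t (i - 1)" for i
  have q: "is_quantizer a b N t" using uniform_quantizer[OF ab \<delta>] by (simp add: N_def t_def)
  have "12 * uniform_distortion \<delta>
          = (\<Sum>i=1..N. 12 * integral {t (i - 1)..t i} (\<lambda>x. (x - uni_c a b \<delta> i)^2 * f x))"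
    by (simp add: uniform_distortion_def distortion_def sum_distrib_left N_def t_def)
  also have "\<dots> \<le> (\<Sum>i=1..N. \<delta>^2 * (cellprob f t i + \<epsilon> * len i))"
    using uniform_cell_moment_le[OF \<delta> \<epsilon> _ flat] by (intro sum_mono) (simp add: N_def t_def len_def)
  also have "\<dots> = \<delta>^2 * ((\<Sum>i=1..N. cellprob f t i) + \<epsilon> * (\<Sum>i=1..N. len i))"
    by (simp add: sum_distrib_left[symmetric] sum.distrib)
  also have "\<dots> = \<delta>^2 * (1 + \<epsilon> * (b - a))"
    using sum_cellprob[OF q] sum_quantizer_cell_lengths[OF q] by (simp add: len_def)
  finally show ?thesis .
qed

lemma uniform_cellprob_lt_1:
  assumes \<delta>: "0 < \<delta>" "\<delta> < b - a" and i: "i \<in> {1..uni_n a b \<delta>}"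
  shows "cellprob f (uni_t a b \<delta>) i < 1"
proof -
  define N where "N = uni_n a b \<delta>"
  define P where "P = cellprob f (uni_t a b \<delta>)"
  have q: "is_quantizer a b N (uni_t a b \<delta>)" using uniform_quantizer[OF ab \<delta>(1)] by (simp add: N_def)
  define j :: nat where "j = (if i = 1 then 2 else 1)"
  have j: "j \<in> {1..N} - {i}"
    using uniform_cell_count_ge_2[OF \<delta>] i by (auto simp: N_def j_def)
  have P: "0 < P k" if "k \<in> {1..N}" for k using cellprob_pos[OF q that] by (simp add: P_def)
  have "(\<Sum>k=1..N. P k) = P i + (\<Sum>k\<in>{1..N} - {i}. P k)"
    using i by (simp add: sum.remove N_def)
  moreover have "P j \<le> (\<Sum>k\<in>{1..N} - {i}. P k)"
    by (rule member_le_sum) (use j P in \<open>auto intro: less_imp_le\<close>)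
  moreover have "0 < P j" using P j by simp
  ultimately show ?thesis using sum_cellprob[OF q] by (simp add: P_def)
qed

lemma uniform_entropy_ge:
  assumes \<delta>: "0 < \<delta>" and M: "\<forall>x. f x \<le> M"
  shows "- ln (M * \<delta>) \<le> uniform_entropy \<delta>"
proof -
  define N where "N = uni_n a b \<delta>"
  define P where "P = cellprob f (uni_t a b \<delta>)"
  have q: "is_quantizer a b N (uni_t a b \<delta>)" using uniform_quantizer[OF ab \<delta>] by (simp add: N_def)
  have M0: "0 \<le> M" using M nonneg order_trans by blast
  have "- P i * ln (M * \<delta>) \<le> - P i * ln (P i)" if i: "i \<in> {1..N}" for i
  proof -
    have P: "0 < P i" using cellprob_pos[OF q i] by (simp add: P_def)
    have "P i \<le> M * (uni_t a b \<delta> i - uni_t a b \<delta> (i - 1))"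
      using cell_mass_le_length M quantizer_cell[OF q i] by (simp add: P_def cellprob_def less_imp_le)
    also have "\<dots> \<le> M * \<delta>"
      using uniform_cell_length_le[of \<delta> a b i] \<delta> M0 by (intro mult_left_mono) auto
    finally show ?thesis using P by (intro mult_left_mono_neg ln_mono) auto
  qed
  hence "(\<Sum>i=1..N. - P i * ln (M * \<delta>)) \<le> (\<Sum>i=1..N. - P i * ln (P i))"
    by (rule sum_mono)
  also have "\<dots> = uniform_entropy \<delta>"
    by (simp add: uniform_entropy_def entropy_def N_def P_def)
  finally have "(\<Sum>i=1..N. - P i * ln (M * \<delta>)) \<le> uniform_entropy \<delta>" .
  thus ?thesis using sum_cellprob[OF q] by (simp add: sum_negf sum_distrib_right[symmetric] P_def)
qed

lemma uniform_shannon_spread_le: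
  assumes \<delta>: "0 < \<delta>" and M: "1 \<le> M" "\<forall>x. f x \<le> M"
  defines "P \<equiv> cellprob f (uni_t a b \<delta>)"
  shows "(\<Sum>i=1..uni_n a b \<delta>. P i * (log 2 (P i / \<delta>))^2)
           \<le> (b - a + \<delta>) * (4 + M * (ln M)^2) / (ln 2)^2"
proof -
  define N where "N = uni_n a b \<delta>"
  define K where "K = 4 + M * (ln M)^2"
  have q: "is_quantizer a b N (uni_t a b \<delta>)" using uniform_quantizer[OF ab \<delta>] by (simp add: N_def)
  have "P i * (log 2 (P i / \<delta>))^2 \<le> \<delta> * K / (ln 2)^2" if i: "i \<in> {1..N}" for i
  proof -
    define x where "x = P i / \<delta>"
    have "P i \<le> M * (uni_t a b \<delta> i - uni_t a b \<delta> (i - 1))"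
      using cell_mass_le_length M quantizer_cell[OF q i] by (simp add: P_def cellprob_def less_imp_le)
    also have "\<dots> \<le> M * \<delta>"
      using uniform_cell_length_le[of \<delta> a b i] \<delta> M by (intro mult_left_mono) auto
    finally have x: "0 < x" "x \<le> M"
      using cellprob_pos[OF q i] \<delta> by (auto simp: x_def P_def field_simps)
    have "P i * (log 2 (P i / \<delta>))^2 = \<delta> * (x * (ln x)^2) / (ln 2)^2"
      using \<delta> by (simp add: x_def log_def power_divide)
    also have "\<dots> \<le> \<delta> * K / (ln 2)^2"
      using mult_ln_squared_le[OF x M(1)] \<delta> by (intro divide_right_mono mult_left_mono) (auto simp: K_def)
    finally show ?thesis .
  qed
  hence "(\<Sum>i=1..N. P i * (log 2 (P i / \<delta>))^2) \<le> (\<Sum>i=1..N. \<delta> * K / (ln 2)^2)"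
    by (rule sum_mono)
  also have "\<dots> = real N * \<delta> * K / (ln 2)^2" by simp
  also have "\<dots> \<le> (b - a + \<delta>) * K / (ln 2)^2"
    using uniform_cell_count_le[OF ab \<delta>] M
    by (intro divide_right_mono mult_right_mono) (auto simp: N_def K_def less_imp_le)
  finally show ?thesis by (simp add: N_def K_def)
qed

lemma uniform_zero_wait_aoi_le:
  assumes \<delta>: "0 < \<delta>" "\<delta> < b - a" and M: "1 \<le> M" "\<forall>x. f x \<le> M"
  defines "H \<equiv> uniform_entropy \<delta> / ln 2"
  shows "aoi_opt f (uni_n a b \<delta>) (uni_t a b \<delta>) (\<lambda>_. 0)
           \<le> 3/2 * H + (b - a + \<delta>) * (4 + M * (ln M)^2) / (ln 2)^2 / (2 * H)"
proof -
  define N where "N = uni_n a b \<delta>"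
  define t where "t = uni_t a b \<delta>"
  define P where "P = cellprob f t"
  define l where "l i = - log 2 (P i)" for i
  have q: "is_quantizer a b N t" using uniform_quantizer[OF ab \<delta>(1)] by (simp add: N_def t_def)
  have P: "0 < P i" "P i < 1" if "i \<in> {1..N}" for i
    using cellprob_pos[OF q that] uniform_cellprob_lt_1[OF \<delta>] that by (auto simp: P_def N_def t_def)
  have P1: "(\<Sum>i=1..N. P i) = 1" using sum_cellprob[OF q] by (simp add: P_def)
  have H: "H = (\<Sum>i=1..N. P i * l i)"
    by (simp add: H_def uniform_entropy_def entropy_def l_def log_def sum_divide_distrib P_def N_def t_def)
  have "0 < l i" if "i \<in> {1..N}" for i using P[OF that] by (simp add: l_def)
  hence "0 < H" unfolding H
    using q P by (intro sum_pos mult_pos_pos) (auto simp: is_quantizer_def)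
  have "aoi_opt f N t (\<lambda>_. 0) \<le> aoi f N t (\<lambda>_. 0) l"
    using P P1 is_code_shannon[of N P] unfolding l_def P_def
    by (intro aoi_opt_le_aoi) (auto intro: less_imp_le)
  also have "\<dots> \<le> 3/2 * H + (\<Sum>i=1..N. P i * (l i - - log 2 \<delta>)^2) / (2 * H)"
    using zero_wait_aoi_le[of f t N l "- log 2 \<delta>"] P1 \<open>0 < H\<close> by (simp add: H P_def)
  also have "(\<Sum>i=1..N. P i * (l i - - log 2 \<delta>)^2) = (\<Sum>i=1..N. P i * (log 2 (P i / \<delta>))^2)"
    using P \<delta> by (intro sum.cong) (auto simp: l_def log_divide_pos power2_commute)
  also have "\<dots> \<le> (b - a + \<delta>) * (4 + M * (ln M)^2) / (ln 2)^2"
    using uniform_shannon_spread_le[OF \<delta>(1) M] by (simp add: P_def N_def t_def)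
  finally show ?thesis
    using \<open>0 < H\<close> by (simp add: N_def t_def divide_right_mono)
qed

section \<open>Asymptotic optimality\<close>

lemma eventually_density_flat:
  assumes "0 < \<epsilon>"
  shows "\<forall>\<^sub>F \<delta> in at_right 0. oscillation_le \<delta> \<epsilon>"
proof -
  obtain r where r: "0 < r"
    "\<And>x y. x \<in> {a..b} \<Longrightarrow> y \<in> {a..b} \<Longrightarrow> \<bar>x - y\<bar> < r \<Longrightarrow> \<bar>f x - f y\<bar> < \<epsilon>"
    using density_uniformly_continuous[OF assms] by blast
  have "\<forall>\<^sub>F \<delta> in at_right 0. \<delta> < r" using r(1) by real_asymp
  thus ?thesis
  proof eventually_elim
    case (elim \<delta>)
    show ?case
      unfolding oscillation_le_def
    proof (intro ballI impI)
      fix x y assume xy: "x \<in> {a..b}" "y \<in> {a..b}" "\<bar>x - y\<bar> \<le> \<delta>"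
      with elim have "\<bar>f x - f y\<bar> < \<epsilon>" by (intro r(2)) auto
      thus "f y \<le> f x + \<epsilon>" by (auto simp: abs_less_iff)
    qed
  qed
qed

lemma eventually_uniform_entropy_le:
  assumes \<epsilon>: "0 < \<epsilon>"
  shows "\<forall>\<^sub>F \<delta> in at_right 0. uniform_entropy \<delta> \<le> differential_entropy - ln \<delta> + \<epsilon>"
proof -
  obtain M where M: "1 \<le> M" "\<forall>x. f x \<le> M" using density_bounded by auto
  define \<epsilon>' where "\<epsilon>' = \<epsilon> / (2 * (b - a + 1))"
  have \<epsilon>': "0 < \<epsilon>'" "(b - a + 1) * \<epsilon>' = \<epsilon> / 2"
    using \<epsilon> ab by (simp_all add: \<epsilon>'_def field_simps)
  have "\<forall>\<^sub>F \<delta> in at_right (0::real). 0 < \<delta>" by (rule eventually_at_right_less)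
  moreover have "\<forall>\<^sub>F \<delta> in at_right (0::real). \<delta> < 1" by real_asymp
  moreover have "\<forall>\<^sub>F \<delta> in at_right 0. M * \<delta> < \<epsilon> / 2" using \<epsilon> by real_asymp
  moreover note eventually_density_flat[OF \<epsilon>'(1)]
  ultimately show ?thesis
  proof eventually_elim
    case (elim \<delta>)
    hence "uniform_entropy \<delta> \<le> differential_entropy - ln \<delta> + (b - a + \<delta>) * \<epsilon>' + M * \<delta>"
      using \<epsilon>' M by (intro uniform_entropy_le) auto
    moreover have "(b - a + \<delta>) * \<epsilon>' \<le> (b - a + 1) * \<epsilon>'"
      using elim \<epsilon>' by (intro mult_right_mono) auto
    ultimately show ?case using elim \<epsilon>' by linarith
  qed
qed

lemma eventually_uniform_distortion_le:
  assumes \<epsilon>: "0 < \<epsilon>"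
  shows "\<forall>\<^sub>F \<delta> in at_right 0. 12 * uniform_distortion \<delta> \<le> (1 + \<epsilon>) * \<delta>^2"
proof -
  have "0 < \<epsilon> / (b - a)" using \<epsilon> ab by simp
  have "\<forall>\<^sub>F \<delta> in at_right (0::real). 0 < \<delta>" by (rule eventually_at_right_less)
  moreover note eventually_density_flat[OF \<open>0 < \<epsilon> / (b - a)\<close>]
  ultimately show ?thesis
  proof eventually_elim
    case (elim \<delta>)
    hence "12 * uniform_distortion \<delta> \<le> \<delta>^2 * (1 + \<epsilon> / (b - a) * (b - a))"
      using \<epsilon> ab by (intro uniform_distortion_le) auto
    thus ?case using ab by (simp add: mult.commute)
  qed
qed

lemma eventually_entropy_ge_uniform:
  assumes \<rho>: "0 < \<rho>"
  shows "\<forall>\<^sub>F \<delta> in at_right 0. \<forall>n t c. is_quantizer a b n t \<and> distortion f n t c \<le> uniform_distortion \<delta>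
           \<longrightarrow> uniform_entropy \<delta> - \<rho> \<le> entropy n (cellprob f t)"
proof -
  obtain D0 where D0: "0 < D0" and entropy_ge:
    "\<And>n t c. is_quantizer a b n t \<Longrightarrow> distortion f n t c \<le> D0 \<Longrightarrow>
       differential_entropy - ln (12 * distortion f n t c) / 2 - \<rho> / 3 \<le> entropy n (cellprob f t)"
    using quantizer_entropy_ge[of "\<rho> / 3"] \<rho> by auto
  have "\<forall>\<^sub>F \<delta> in at_right (0::real). 0 < \<delta>" by (rule eventually_at_right_less)
  moreover have "\<forall>\<^sub>F \<delta> in at_right (0::real). (1 + \<rho> / 3) * \<delta>^2 \<le> 12 * D0" using D0 by real_asymp
  moreover have "0 < \<rho> / 3" using \<rho> by simp
  note eventually_uniform_entropy_le[OF this] eventually_uniform_distortion_le[OF this]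
  ultimately show ?thesis
  proof eventually_elim
    case (elim \<delta>)
    show ?case
    proof (intro allI impI, elim conjE)
      fix n t c assume q: "is_quantizer a b n t" and D: "distortion f n t c \<le> uniform_distortion \<delta>"
      have "0 < distortion f n t c" by (rule distortion_pos[OF q])
      hence "ln (12 * distortion f n t c) \<le> ln ((1 + \<rho> / 3) * \<delta>^2)"
        using D elim by (intro ln_mono) auto
      also have "\<dots> = ln (1 + \<rho> / 3) + 2 * ln \<delta>"
        using elim \<rho> by (simp add: ln_mult ln_realpow)
      also have "ln (1 + \<rho> / 3) \<le> \<rho> / 3"
        using \<rho> by (intro ln_add_one_self_le_self) simp
      finally have "ln (12 * distortion f n t c) / 2 \<le> ln \<delta> + \<rho> / 6" by simp
      moreover have "distortion f n t c \<le> D0" using D elim by simp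
      ultimately show "uniform_entropy \<delta> - \<rho> \<le> entropy n (cellprob f t)"
        using entropy_ge[OF q] elim \<rho> by fastforce
    qed
  qed
qed

lemma uniform_entropy_tendsto_at_top: "filterlim uniform_entropy at_top (at_right 0)"
proof -
  obtain M where M: "1 \<le> M" "\<forall>x. f x \<le> M" using density_bounded by auto
  have "filterlim (\<lambda>\<delta>. - ln (M * \<delta>)) at_top (at_right 0)" using M by real_asymp
  moreover have "\<forall>\<^sub>F \<delta> in at_right 0. - ln (M * \<delta>) \<le> uniform_entropy \<delta>"
    using eventually_at_right_less by eventually_elim (use uniform_entropy_ge M in auto)
  ultimately show ?thesis by (rule filterlim_at_top_mono)
qed

lemma eventually_uniform_zero_wait_aoi_le:
  obtains V where "\<forall>\<^sub>F \<delta> in at_right 0.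
    aoi_opt f (uni_n a b \<delta>) (uni_t a b \<delta>) (\<lambda>_. 0)
      \<le> 3/2 * (uniform_entropy \<delta> / ln 2) + V / uniform_entropy \<delta>"
proof -
  obtain M where M: "1 \<le> M" "\<forall>x. f x \<le> M" using density_bounded by auto
  define V where "V = (b - a + 1) * (4 + M * (ln M)^2) / (2 * ln 2)"
  have "\<forall>\<^sub>F \<delta> in at_right (0::real). 0 < \<delta>" by (rule eventually_at_right_less)
  moreover have "\<forall>\<^sub>F \<delta> in at_right (0::real). \<delta> < min 1 (b - a)" using ab by real_asymp
  moreover have "\<forall>\<^sub>F \<delta> in at_right 0. 0 < uniform_entropy \<delta>"
    using uniform_entropy_tendsto_at_top unfolding filterlim_at_top_dense by blast
  ultimately have "\<forall>\<^sub>F \<delta> in at_right 0.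
    aoi_opt f (uni_n a b \<delta>) (uni_t a b \<delta>) (\<lambda>_. 0)
      \<le> 3/2 * (uniform_entropy \<delta> / ln 2) + V / uniform_entropy \<delta>"
  proof eventually_elim
    case (elim \<delta>)
    have "(b - a + \<delta>) * (4 + M * (ln M)^2) / (ln 2)^2 / (2 * (uniform_entropy \<delta> / ln 2))
            \<le> (b - a + 1) * (4 + M * (ln M)^2) / (ln 2)^2 / (2 * (uniform_entropy \<delta> / ln 2))"
      using elim M by (intro divide_right_mono mult_right_mono) auto
    also have "\<dots> = V / uniform_entropy \<delta>"
      using elim by (simp add: V_def power2_eq_square field_simps)
    finally show ?case
      using uniform_zero_wait_aoi_le[of \<delta> M] elim M by simp
  qed
  thus thesis by (rule that)
qed

lemma constrained_aoi_inf_bounds: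
  assumes W: "0 \<le> W" and \<delta>: "0 < \<delta>"
    and entropy_ge: "\<forall>n t c. is_quantizer a b n t \<and> distortion f n t c \<le> uniform_distortion \<delta>
                       \<longrightarrow> uniform_entropy \<delta> - \<rho> \<le> entropy n (cellprob f t)"
  defines "S \<equiv> {aoi_opt f n t z | n t c z.
                  is_policy W z \<and> is_quantizer a b n t \<and> distortion f n t c \<le> uniform_distortion \<delta>}"
  shows "3/2 * ((uniform_entropy \<delta> - \<rho>) / ln 2) \<le> Inf S"
    and "Inf S \<le> aoi_opt f (uni_n a b \<delta>) (uni_t a b \<delta>) (\<lambda>_. 0)"
proof -
  have lower: "3/2 * ((uniform_entropy \<delta> - \<rho>) / ln 2) \<le> y" if "y \<in> S" for y
  proof -
    obtain n t c z where y: "y = aoi_opt f n t z" "is_policy W z" "is_quantizer a b n t"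
      "distortion f n t c \<le> uniform_distortion \<delta>"
      using \<open>y \<in> S\<close> unfolding S_def by blast
    have "uniform_entropy \<delta> - \<rho> \<le> entropy n (cellprob f t)"
      using entropy_ge y(3,4) by blast
    hence "3/2 * ((uniform_entropy \<delta> - \<rho>) / ln 2) \<le> 3/2 * (entropy n (cellprob f t) / ln 2)"
      by (intro mult_left_mono divide_right_mono) auto
    also have "\<dots> \<le> y"
      using y aoi_opt_ge_quantizer_entropy by (simp add: is_policy_def)
    finally show ?thesis .
  qed
  have "aoi_opt f (uni_n a b \<delta>) (uni_t a b \<delta>) (\<lambda>_. 0) \<in> S"
    unfolding S_def uniform_distortion_def using W uniform_quantizer[OF ab \<delta>]
    by (fastforce simp: is_policy_def)
  thus "Inf S \<le> aoi_opt f (uni_n a b \<delta>) (uni_t a b \<delta>) (\<lambda>_. 0)"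
    using lower by (intro cInf_lower bdd_belowI) auto
  show "3/2 * ((uniform_entropy \<delta> - \<rho>) / ln 2) \<le> Inf S"
    using lower \<open>_ \<in> S\<close> by (intro cInf_greatest) auto
qed

lemma zero_wait_uniform_aoi_gap_tendsto_0:
  assumes W: "0 \<le> W"
  shows "((\<lambda>\<delta>. aoi_opt f (uni_n a b \<delta>) (uni_t a b \<delta>) (\<lambda>_. 0)
            - Inf {aoi_opt f n t z | n t c z.
                     is_policy W z \<and> is_quantizer a b n t \<and> distortion f n t c \<le> uniform_distortion \<delta>})
          \<longlongrightarrow> 0) (at_right 0)"
proof (rule tendstoI)
  fix e :: real assume e: "0 < e"
  obtain V where aoi_le: "\<forall>\<^sub>F \<delta> in at_right 0.
      aoi_opt f (uni_n a b \<delta>) (uni_t a b \<delta>) (\<lambda>_. 0)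
        \<le> 3/2 * (uniform_entropy \<delta> / ln 2) + V / uniform_entropy \<delta>"
    using eventually_uniform_zero_wait_aoi_le by blast
  have "((\<lambda>\<delta>. V / uniform_entropy \<delta>) \<longlongrightarrow> 0) (at_right 0)"
    by (intro tendsto_divide_0[OF tendsto_const] filterlim_at_top_imp_at_infinity
        uniform_entropy_tendsto_at_top)
  hence small: "\<forall>\<^sub>F \<delta> in at_right 0. V / uniform_entropy \<delta> < e / 2"
    using e by (intro order_tendstoD) auto
  have "0 < e * ln 2 / 3" using e by simp
  from small aoi_le eventually_entropy_ge_uniform[OF this] eventually_at_right_less
  show "\<forall>\<^sub>F \<delta> in at_right 0. dist
      (aoi_opt f (uni_n a b \<delta>) (uni_t a b \<delta>) (\<lambda>_. 0)
        - Inf {aoi_opt f n t z | n t c z.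
                 is_policy W z \<and> is_quantizer a b n t \<and> distortion f n t c \<le> uniform_distortion \<delta>}) 0 < e"
  proof eventually_elim
    case (elim \<delta>)
    define H where "H = uniform_entropy \<delta> / ln 2"
    define I where "I = Inf {aoi_opt f n t z | n t c z.
                       is_policy W z \<and> is_quantizer a b n t \<and> distortion f n t c \<le> uniform_distortion \<delta>}"
    have "3/2 * ((uniform_entropy \<delta> - e * ln 2 / 3) / ln 2) = 3/2 * H - e / 2"
      by (simp add: H_def field_simps)
    hence "3/2 * H - e / 2 \<le> I" "I \<le> aoi_opt f (uni_n a b \<delta>) (uni_t a b \<delta>) (\<lambda>_. 0)"
      using constrained_aoi_inf_bounds[OF W \<open>0 < \<delta>\<close> elim(3)] by (simp_all add: I_def)
    moreover have "aoi_opt f (uni_n a b \<delta>) (uni_t a b \<delta>) (\<lambda>_. 0) < 3/2 * H + e / 2"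
      using elim(1,2) unfolding H_def by linarith
    ultimately show ?case by (simp add: dist_real_def I_def[symmetric] abs_less_iff)
  qed
qed

end

theorem theorem1:
  fixes f :: "real \<Rightarrow> real" and a b W :: real
  assumes ab: "a < b"
    and nonneg: "\<forall>x. f x \<ge> 0"
    and support: "closure {x. f x > 0} = {a..b}"
    and pdf: "(f has_integral 1) {a..b}"
    and cont: "continuous_on {a..b} f"
    and diff: "\<forall>x\<in>{a<..<b}. f differentiable (at x)"
    and B1: "(\<lambda>x. f x * (log 2 (f x))^2) absolutely_integrable_on {a..b}"
    and B2: "(\<lambda>x. f x * log 2 (f x)) absolutely_integrable_on {a..b}"
    and W: "W \<ge> 0"
  shows "((\<lambda>\<delta>. aoi_opt f (uni_n a b \<delta>) (uni_t a b \<delta>) (\<lambda>_. 0)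
            - Inf {aoi_opt f n t z | n t c z.
                     is_policy W z \<and> is_quantizer a b n t \<and>
                     distortion f n t c \<le> distortion f (uni_n a b \<delta>) (uni_t a b \<delta>) (uni_c a b \<delta>)})
          \<longlongrightarrow> 0) (at_right 0)"
proof -
  have "(\<lambda>x. ln 2 * (f x * log 2 (f x))) integrable_on {a..b}"
    using B2 by (intro integrable_on_mult_right) (simp add: absolutely_integrable_on_def)
  moreover have "(\<lambda>x. ln 2 * (f x * log 2 (f x))) = (\<lambda>x. f x * ln (f x))"
    by (simp add: log_def fun_eq_iff)
  ultimately interpret interval_density f a b
    using ab nonneg support pdf cont by unfold_locales auto
  show ?thesis
    using zero_wait_uniform_aoi_gap_tendsto_0[OF W] by (simp add: uniform_distortion_def)
qed

end
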